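(* Let $k$ be an algebraically closed field, $n\ge1$, $1\le g\le n$, and let $K$ and the representations $V_{(p,q)}$ be as in the context. Fix $m\in\mathbb N$. Let $Q_m^0$ be the quiver with vertices $(r,s)_0$ for $s\in\{1,\dots,g\}$ and $0\le r\le gm+s$, and arrows $\pi_0(r,s):(r+1,s^+)_0\to(r,s)_0$ and $\rho_0(r,s):(r,s)_0\to(r+1,s)_0$ whenever both endpoints are vertices of $Q_m^0$, where $s^+\in\{1,\dots,g\}$, $s^+\equiv s+1\pmod g$. Let $F_0:kQ_m^0\to\operatorname{rep}K$ be the $k$-linear functor on the path category defined in the context, and let $R_m^0$ be the full subcategory of $\operatorname{rep}K$ whose objects are the $F_0X$, $X$ a vertex of $Q_m^0$. Let $\overline{kQ_m^0}$ be the quotient of the path category $kQ_m^0$ by the ideal generated by (i) $\pi_0(r+1,s)\circ\rho_0(r+1,s^+)=\rho_0(r,s)\circ\pi_0(r,s)$ for all $r,s$ for which all arrows involved lie in $Q_m^0$, and (ii) $\pi_0(0,s)\circ\rho_0(0,s^+)=0$ for all $s\in\{1,\dots,g\}$. Then $F_0$ induces an isomorphism of $k$-categories $\overline{F_0}:\overline{kQ_m^0}\to R_m^0$.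
   Context: $K$: quiver with vertices $0,\dots,n$ and arrows $\beta_x:x\to x+1$ ($0\le x\le g-1$) and $\alpha_x:x+1\to x$ ($g\le x\le n$), indices modulo $n+1$; $\operatorname{rep}K$ is the category of finite-dimensional representations. For $0\le p\le n$, $q\ge p$: $V_{(p,q)}(x)$ is spanned by the basis vectors $e_i$, $p\le i\le q$, $i\equiv x\pmod{n+1}$; $V_{(p,q)}(\beta_x)(e_i)=e_{i+1}$ if $i<q$, $=0$ if $i=q$; $V_{(p,q)}(\alpha_x)(e_i)=e_{i-1}$ if $i>p$, $=0$ if $i=p$. Composition $\circ$ is written right to left (apply the right factor first). Definition of $F_0$ on vertices: for $(r,s)$ with $r\in\mathbb N$, $s\in\mathbb Z$, let $p\in\{1,\dots,g\}$ with $p\equiv s-r\pmod g$, $q'\in\{0,\dots,g-1\}$ with $q'\equiv s\pmod g$, and $t$ the number of integers $s'$ with $s'\equiv0\pmod g$ and $s-r\le s'\le s$; put $F(r,s)=V_{(p,\,q'+t(n+1))}$ (this depends only on $s$ modulo $g$), and $F_0(r,s)_0=F(r,s)$. On arrows: if $F(r,s)=V_{(p,q)}$, then $F_0\pi_0(r,s):F(r+1,s+1)\to F(r,s)$ is $e_t\mapsto e_t$ for $p\le t\le q$ and $e_t\mapsto 0$ for $t>q$; and $F_0\rho_0(r,s):F(r,s)\to F(r+1,s)$ is $e_t\mapsto e_t$ ($p\le t\le q$) if $2\le p\le g$, and $e_t\mapsto e_{t+n+1}$ ($p\le t\le q$) if $p=1$. The path category $kQ$ of a quiver $Q$ has the vertices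 as objects and $k$-linear combinations of paths as morphisms. *)

theory Defs
  imports "HOL-Computational_Algebra.Polynomial"
begin

text \<open>A k-linear map between spans of basis vectors e_i (i :: nat) is encoded by its
 matrix M: M i j is the coefficient of e_i in the image of e_j.  A basis range is a
 pair (p,q) standing for the basis {e_i. p \<le> i \<le> q}.\<close>

type_synonym 'k mat = "nat \<Rightarrow> nat \<Rightarrow> 'k"

definition mat_mult :: "nat \<times> nat \<Rightarrow> 'k::field mat \<Rightarrow> 'k mat \<Rightarrow> 'k mat" where
  "mat_mult pq A B = (\<lambda>i j. \<Sum>l\<in>{fst pq..snd pq}. A i l * B l j)"

definition id_mat :: "nat \<times> nat \<Rightarrow> 'k::field mat" where
  "id_mat pq = (\<lambda>i j. if i = j \<and> fst pq \<le> j \<and> j \<le> snd pq then 1 else 0)"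

text \<open>Arrow number a (0 \<le> a \<le> n) of K is beta_a : a \<rightarrow> a+1 if a < g, and
 alpha_a : a+1 \<rightarrow> a (indices mod n+1) if g \<le> a.  The basis vector e_i of V_(p,q)
 lies at vertex i mod (n+1).  Rep n g p q a is the matrix of V_(p,q)(arrow a),
 viewed as an endomorphism of the total space (zero outside the source vertex).\<close>

definition Rep :: "nat \<Rightarrow> nat \<Rightarrow> nat \<Rightarrow> nat \<Rightarrow> nat \<Rightarrow> 'k::field mat" where
  "Rep n g p q a = (\<lambda>i j.
     if a < g then
       (if j mod (n+1) = a \<and> p \<le> j \<and> j < q \<and> i = j + 1 then 1 else 0)
     else
       (if j mod (n+1) = (a+1) mod (n+1) \<and> p < j \<and> j \<le> q \<and> i = j - 1 then 1 else 0))"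

text \<open>Hom_{rep K}(V_(p,q), V_(p',q')): families of linear maps at the vertices
 (encoded as one vertex-graded matrix) commuting with all arrows of K.\<close>

definition HomK :: "nat \<Rightarrow> nat \<Rightarrow> nat \<times> nat \<Rightarrow> nat \<times> nat \<Rightarrow> 'k::field mat set" where
  "HomK n g V W = {M.
     (\<forall>i j. M i j \<noteq> 0 \<longrightarrow> fst V \<le> j \<and> j \<le> snd V \<and> fst W \<le> i \<and> i \<le> snd W
                        \<and> i mod (n+1) = j mod (n+1)) \<and>
     (\<forall>a\<le>n. mat_mult W (Rep n g (fst W) (snd W) a) M = mat_mult V M (Rep n g (fst V) (snd V) a))}"

datatype arr = Pi nat nat | Rho nat nat

definition splus :: "nat \<Rightarrow> nat \<Rightarrow> nat" where
  "splus g s = s mod g + 1"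

definition is_vertex :: "nat \<Rightarrow> nat \<Rightarrow> nat \<times> nat \<Rightarrow> bool" where
  "is_vertex g m X = (1 \<le> snd X \<and> snd X \<le> g \<and> fst X \<le> g * m + snd X)"

fun src :: "nat \<Rightarrow> arr \<Rightarrow> nat \<times> nat" where
  "src g (Pi r s) = (r + 1, splus g s)"
| "src g (Rho r s) = (r, s)"

fun tgt :: "nat \<Rightarrow> arr \<Rightarrow> nat \<times> nat" where
  "tgt g (Pi r s) = (r, s)"
| "tgt g (Rho r s) = (r + 1, s)"

definition is_arrow :: "nat \<Rightarrow> nat \<Rightarrow> arr \<Rightarrow> bool" where
  "is_arrow g m a = (is_vertex g m (src g a) \<and> is_vertex g m (tgt g a))"

text \<open>Paths are lists of arrows in the order in which they are applied
 (so [a1,a2] is the composite a2 \<circ> a1).\<close>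

fun is_path :: "nat \<Rightarrow> nat \<Rightarrow> nat \<times> nat \<Rightarrow> arr list \<Rightarrow> nat \<times> nat \<Rightarrow> bool" where
  "is_path g m X [] Y = (X = Y \<and> is_vertex g m X)"
| "is_path g m X (a # w) Y = (is_arrow g m a \<and> src g a = X \<and> is_path g m (tgt g a) w Y)"

definition kQ :: "nat \<Rightarrow> nat \<Rightarrow> nat \<times> nat \<Rightarrow> nat \<times> nat \<Rightarrow> (arr list \<Rightarrow> 'k::field) set" where
  "kQ g m X Y = {c. finite {w. c w \<noteq> 0} \<and> (\<forall>w. c w \<noteq> 0 \<longrightarrow> is_path g m X w Y)}"

definition path_vec :: "arr list \<Rightarrow> arr list \<Rightarrow> 'k::field" where
  "path_vec u = (\<lambda>w. if w = u then 1 else 0)"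

text \<open>Generating relations, as triples (start, combination of paths, end).\<close>

definition Rels :: "nat \<Rightarrow> nat \<Rightarrow> ((nat \<times> nat) \<times> (arr list \<Rightarrow> 'k::field) \<times> (nat \<times> nat)) set" where
  "Rels g m =
     {((r+1, splus g s),
       (\<lambda>w. path_vec [Rho (r+1) (splus g s), Pi (r+1) s] w - path_vec [Pi r s, Rho r s] w),
       (r+1, s)) | r s.
        1 \<le> s \<and> s \<le> g \<and>
        is_arrow g m (Rho (r+1) (splus g s)) \<and> is_arrow g m (Pi (r+1) s) \<and>
        is_arrow g m (Pi r s) \<and> is_arrow g m (Rho r s)}
   \<union> {((0, splus g s), path_vec [Rho 0 (splus g s), Pi 0 s], (0, s)) | s. 1 \<le> s \<and> s \<le> g}"

text \<open>v \<circ> \<rho> \<circ> u for paths u, v and a combination \<rho> of paths.\<close>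

definition sandwich :: "arr list \<Rightarrow> (arr list \<Rightarrow> 'k::field) \<Rightarrow> arr list \<Rightarrow> arr list \<Rightarrow> 'k" where
  "sandwich u \<rho> v = (\<lambda>w. if \<exists>w'. w = u @ w' @ v then \<rho> (THE w'. w = u @ w' @ v) else 0)"

definition ideal_gens :: "nat \<Rightarrow> nat \<Rightarrow> nat \<times> nat \<Rightarrow> nat \<times> nat \<Rightarrow> (arr list \<Rightarrow> 'k::field) set" where
  "ideal_gens g m X Y = {sandwich u \<rho> v | u \<rho> v A B.
      (A, \<rho>, B) \<in> Rels g m \<and> is_path g m X u A \<and> is_path g m B v Y}"

definition ideal :: "nat \<Rightarrow> nat \<Rightarrow> nat \<times> nat \<Rightarrow> nat \<times> nat \<Rightarrow> (arr list \<Rightarrow> 'k::field) set" where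
  "ideal g m X Y = {h. \<exists>N (a :: nat \<Rightarrow> 'k) G. (\<forall>i<N. G i \<in> ideal_gens g m X Y)
                        \<and> h = (\<lambda>w. \<Sum>i<N. a i * G i w)}"

definition Fobj :: "nat \<Rightarrow> nat \<Rightarrow> nat \<times> nat \<Rightarrow> nat \<times> nat" where
  "Fobj n g X = (let r = fst X; s = snd X;
      p = nat ((int s - int r - 1) mod int g + 1);
      q' = s mod g;
      t = card {s'::int. int s - int r \<le> s' \<and> s' \<le> int s \<and> int g dvd s'}
    in (p, q' + t * (n + 1)))"

fun Farr :: "nat \<Rightarrow> nat \<Rightarrow> arr \<Rightarrow> 'k::field mat" where
  "Farr n g (Pi r s) = (\<lambda>i j.
     (let S = Fobj n g (r + 1, splus g s); T = Fobj n g (r, s) in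
      if fst S \<le> j \<and> j \<le> snd S \<and> i = j \<and> fst T \<le> j \<and> j \<le> snd T then 1 else 0))"
| "Farr n g (Rho r s) = (\<lambda>i j.
     (let S = Fobj n g (r, s) in
      if fst S \<le> j \<and> j \<le> snd S \<and> i = (if fst S = 1 then j + (n + 1) else j) then 1 else 0))"

fun Fpath :: "nat \<Rightarrow> nat \<Rightarrow> nat \<times> nat \<Rightarrow> arr list \<Rightarrow> 'k::field mat" where
  "Fpath n g X [] = id_mat (Fobj n g X)"
| "Fpath n g X (a # w) = mat_mult (Fobj n g (tgt g a)) (Fpath n g (tgt g a) w) (Farr n g a)"

definition Fmor :: "nat \<Rightarrow> nat \<Rightarrow> nat \<times> nat \<Rightarrow> (arr list \<Rightarrow> 'k::field) \<Rightarrow> 'k mat" where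
  "Fmor n g X c = (\<lambda>i j. \<Sum>w\<in>{w. c w \<noteq> 0}. c w * Fpath n g X w i j)"

end

theory Submission
  imports Defs
begin

text \<open>
  Each F(r,s) is an interval module V_(p,q) whose end points are given in closed form through
  the order embedding stretch of the integers. Between two such intervals (each entered and
  left by arrows beta) every morphism of representations of K is a combination of diagonal
  shifts e_y \<mapsto> e_(y+d), with d a multiple of n+1 in an explicit range.

  On the quiver side, F sends a path from X = (r,s) with i arrows Rho and j arrows Pi to the
  shift determined by i, or to zero when j > r. Modulo the relations, moving the arrows Rho past
  the arrows Pi (commutativity relations) rewrites every path into a normal path Pi^j Rho^i, or
  into zero when j > r (zero relations). The normal paths from X to Y realise each admissible
  shift exactly once, so F is faithful on the quotient and full.
\<close>

section \<open>Integer arithmetic\<close>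

lemma le_div_iff_int:
  fixes a b k :: int
  assumes b: "0 < b"
  shows "k \<le> a div b \<longleftrightarrow> b * k \<le> a"
proof -
  have e: "a - b*k = a + (-k) * b" by simp
  have "(a + (-k) * b) div b = -k + a div b" using b by (intro div_mult_self1) simp
  hence "(a - b*k) div b = a div b - k" unfolding e by simp
  moreover have "(0 \<le> (a - b*k) div b) = (0 \<le> a - b*k)" using b by (rule pos_imp_zdiv_nonneg_iff)
  ultimately show ?thesis by simp
qed

lemma div_less_iff_int: "0 < (b::int) \<Longrightarrow> (a div b < k) = (a < b * k)"
  using le_div_iff_int[of b k a] by linarith

lemma card_multiples_int:
  fixes g :: nat and lo hi :: int
  assumes g: "g > 0" and lh: "lo \<le> hi + 1"
  shows "int (card {x::int. lo \<le> x \<and> x \<le> hi \<and> int g dvd x}) = hi div int g - (lo - 1) div int g"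
proof -
  have gp: "int g > 0" using g by simp
  have eq: "{x::int. lo \<le> x \<and> x \<le> hi \<and> int g dvd x} = (\<lambda>k. int g * k) ` {(lo - 1) div int g + 1 .. hi div int g}"
  proof (safe)
    fix x assume a: "lo \<le> x" "x \<le> hi" "int g dvd x"
    then obtain k where k: "x = int g * k" by (auto elim: dvdE)
    have "k \<le> hi div int g" using a k gp by (simp add: le_div_iff_int)
    moreover have "(lo - 1) div int g < k" using a k gp by (simp add: div_less_iff_int)
    ultimately show "x \<in> (\<lambda>k. int g * k) ` {(lo - 1) div int g + 1 .. hi div int g}" using k by auto
  next
    fix k assume "k \<in> {(lo - 1) div int g + 1 .. hi div int g}"
    then have k1: "(lo - 1) div int g < k" and k2: "k \<le> hi div int g" by auto
    show "int g * k \<le> hi" using k2 gp by (simp add: le_div_iff_int)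
    show "lo \<le> int g * k" using k1 gp by (simp add: div_less_iff_int)
    show "int g dvd int g * k" by simp
  qed
  have inj: "inj_on (\<lambda>k. int g * k) A" for A using g by (auto simp: inj_on_def)
  have "card {x::int. lo \<le> x \<and> x \<le> hi \<and> int g dvd x} = card {(lo - 1) div int g + 1 .. hi div int g}"
    unfolding eq by (rule card_image[OF inj])
  moreover have "(lo - 1) div int g \<le> hi div int g" using lh gp by (simp add: zdiv_mono1)
  ultimately show ?thesis by simp
qed

lemma div_mod_pred_int:
  fixes a g :: int
  assumes g: "0 < g"
  shows "(a - 1) div g = (if a mod g = 0 then a div g - 1 else a div g)"
    and "(a - 1) mod g = (if a mod g = 0 then g - 1 else a mod g - 1)"
proof -
  have m: "0 \<le> a mod g" "a mod g < g" using g by auto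
  have "a - 1 = g * (if a mod g = 0 then a div g - 1 else a div g)
              + (if a mod g = 0 then g - 1 else a mod g - 1)"
    using mult_div_mod_eq[of g a] by (cases "a mod g = 0") (simp_all add: algebra_simps)
  moreover have "0 \<le> (if a mod g = 0 then g - 1 else a mod g - 1)"
    "(if a mod g = 0 then g - 1 else a mod g - 1) < g" using g m by auto
  ultimately show "(a - 1) div g = (if a mod g = 0 then a div g - 1 else a div g)"
    and "(a - 1) mod g = (if a mod g = 0 then g - 1 else a mod g - 1)"
    using int_div_pos_eq int_mod_pos_eq by blast+
qed

lemma dvd_range_eq:
  fixes g :: nat
  assumes "1 \<le> a" "a \<le> g" "1 \<le> b" "b \<le> g" "int g dvd (int a - int b)"
  shows "a = b"
proof (rule ccontr)
  assume "a \<noteq> b"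
  then have "0 < \<bar>int a - int b\<bar>" by simp
  moreover have "\<bar>int a - int b\<bar> < int g" using assms by auto
  moreover have "int g dvd \<bar>int a - int b\<bar>" using assms(5) by simp
  ultimately show False using zdvd_imp_le by fastforce
qed

lemma mod_pred_eq:
  fixes y :: nat
  assumes "1 \<le> y" "a \<le> n" "y mod (n+1) = (a+1) mod (n+1)"
  shows "(y - 1) mod (n+1) = a"
proof -
  obtain z where y: "y = Suc z" using assms(1) by (cases y) auto
  have "z mod (n+1) < n+1" by simp
  then show ?thesis using assms unfolding y by (auto simp: mod_Suc split: if_splits)
qed

lemma mod_eq_if_diff_dvd: "int x = int y + d \<Longrightarrow> (int n + 1) dvd d \<Longrightarrow> x mod (n+1) = y mod (n+1)"
  by (metis Suc_eq_plus1 add.commute add_diff_cancel_right' dvd_nat_abs_iff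
    int_ops(4) mod_eq_iff_dvd_symdiff_nat)

text \<open>stretch (q g + r) = q (n + 1) + r for 0 \<le> r < g; it is strictly monotone as g \<le> n + 1.\<close>

definition stretch :: "nat \<Rightarrow> nat \<Rightarrow> int \<Rightarrow> int" where
  "stretch n g y = (int n + 1) * (y div int g) + y mod int g"

lemma stretch_add_mult: "0 < g \<Longrightarrow> stretch n g (y + int g * k) = stretch n g y + (int n + 1) * k"
  unfolding stretch_def by (simp add: algebra_simps)

lemma stretch_strict_mono:
  assumes g: "0 < g" "g \<le> n + 1" and xy: "x < y"
  shows "stretch n g x < stretch n g y"
proof -
  have gp: "(0::int) < int g" using g by simp
  have d: "x div int g \<le> y div int g" using xy gp by (simp add: zdiv_mono1)
  have x: "x = int g * (x div int g) + x mod int g" by simp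
  have y: "y = int g * (y div int g) + y mod int g" by simp
  have xm: "0 \<le> x mod int g" "x mod int g < int g" using gp by auto
  have ym: "0 \<le> y mod int g" "y mod int g < int g" using gp by auto
  show ?thesis
  proof (cases "x div int g = y div int g")
    case True
    have "x = int g * (y div int g) + x mod int g" using x True by simp
    then have "x mod int g < y mod int g" using y xy by linarith
    then show ?thesis unfolding stretch_def using True by simp
  next
    case False
    then have lt: "x div int g + 1 \<le> y div int g" using d by simp
    have "(int n + 1) * (x div int g + 1) \<le> (int n + 1) * (y div int g)"
      using lt by (simp add: mult_left_mono)
    then have h: "(int n + 1) * (x div int g) + (int n + 1) \<le> (int n + 1) * (y div int g)"
      by (simp add: algebra_simps)
    have "int g \<le> int n + 1" using g by simp
    then show ?thesis unfolding stretch_def using xm ym h by linarith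
  qed
qed

lemma stretch_mono:
  assumes g: "0 < g" "g \<le> n + 1" and xy: "x \<le> y"
  shows "stretch n g x \<le> stretch n g y"
  using stretch_strict_mono[OF g] xy by (cases "x = y") (auto simp: less_le)

lemma stretch_less_iff:
  assumes g: "0 < g" "g \<le> n + 1"
  shows "(stretch n g x < stretch n g y) = (x < y)"
  using stretch_strict_mono[OF g, of x y] stretch_mono[OF g, of y x] by (meson leD leI)

lemma stretch_le_iff:
  assumes g: "0 < g" "g \<le> n + 1"
  shows "(stretch n g x \<le> stretch n g y) = (x \<le> y)"
  using stretch_strict_mono[OF g, of y x] stretch_mono[OF g, of x y] by (meson leD leI)

section \<open>The representations F(r,s)\<close>

text \<open>F(r,s) = V_(Fstart, Fend): the count t of multiples of g in [s - r, s] in the definition of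
  F is the difference of the quotients of s and of lvl (r,s) = s - r - 1 by g.\<close>

definition lvl :: "nat \<times> nat \<Rightarrow> int" where
  "lvl X = int (snd X) - int (fst X) - 1"

definition lvl_base :: "nat \<Rightarrow> nat \<Rightarrow> nat \<times> nat \<Rightarrow> int" where
  "lvl_base n g X = (int n + 1) * (lvl X div int g)"

definition Fstart :: "nat \<Rightarrow> nat \<times> nat \<Rightarrow> int" where
  "Fstart g X = lvl X mod int g + 1"

definition Fend :: "nat \<Rightarrow> nat \<Rightarrow> nat \<times> nat \<Rightarrow> int" where
  "Fend n g X = stretch n g (int (snd X)) - lvl_base n g X"

lemma Fobj_int:
  assumes g: "0 < g"
  shows "int (fst (Fobj n g X)) = Fstart g X" "int (snd (Fobj n g X)) = Fend n g X"
proof -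
  obtain r s where X: "X = (r, s)" by fastforce
  have gp: "int g > 0" using g by simp
  have c: "int (card {s'::int. int s - int r \<le> s' \<and> s' \<le> int s \<and> int g dvd s'})
      = int s div int g - (int s - int r - 1) div int g"
    using card_multiples_int[OF g, of "int s - int r" "int s"] by simp
  have p: "0 \<le> (int s - int r - 1) mod int g + 1" using gp by (simp add: add_nonneg_nonneg)
  show "int (fst (Fobj n g X)) = Fstart g X"
    unfolding Fobj_def Fstart_def lvl_def X Let_def using p by simp
  define C where "C = card {s'::int. int s - int r \<le> s' \<and> s' \<le> int s \<and> int g dvd s'}"
  have "int (snd (Fobj n g X)) = int (s mod g) + int C * (int n + 1)"
    unfolding Fobj_def X Let_def C_def by (simp add: algebra_simps)
  also have "\<dots> = int s mod int g + (int s div int g - (int s - int r - 1) div int g) * (int n + 1)"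
    using c unfolding C_def by (simp add: of_nat_mod)
  also have "\<dots> = Fend n g X" unfolding Fend_def lvl_base_def stretch_def lvl_def X by (simp add: algebra_simps)
  finally show "int (snd (Fobj n g X)) = Fend n g X" .
qed

lemma Fobj_le_iff:
  assumes "0 < g"
  shows "(fst (Fobj n g X) \<le> y) = (Fstart g X \<le> int y)" "(y \<le> snd (Fobj n g X)) = (int y \<le> Fend n g X)"
    "(fst (Fobj n g X) = 1) = (Fstart g X = 1)"
  using Fobj_int[OF assms, of n X] by linarith+

lemma Fstart_bounds: "0 < g \<Longrightarrow> 1 \<le> Fstart g X \<and> Fstart g X \<le> int g"
  unfolding Fstart_def by (simp add: add1_zle_eq pos_mod_bound)

text \<open>The arrow into the first vertex of V_(p,q) and the arrow out of its last vertex are both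
  arrows beta.\<close>

definition good_interval :: "nat \<Rightarrow> nat \<Rightarrow> nat \<times> nat \<Rightarrow> bool" where
  "good_interval n g V = (1 \<le> fst V \<and> (fst V - 1) mod (n+1) < g \<and> snd V mod (n+1) < g)"

lemma Fend_eq: "Fend n g Z = int (snd Z) mod int g + (int n + 1) * (int (snd Z) div int g - lvl Z div int g)"
  unfolding Fend_def stretch_def lvl_base_def by (simp add: algebra_simps)

lemma Fend_mod:
  assumes g: "0 < g" "g \<le> n"
  shows "Fend n g Z mod (int n + 1) = int (snd Z) mod int g"
proof -
  have gp: "0 < int g" using g by simp
  have "Fend n g Z mod (int n + 1) = int (snd Z) mod int g mod (int n + 1)" unfolding Fend_eq by simp
  also have "\<dots> = int (snd Z) mod int g"
    by (rule mod_pos_pos_trivial)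
      (use g pos_mod_bound[OF gp, of "int (snd Z)"] pos_mod_sign[OF gp, of "int (snd Z)"] in linarith)+
  finally show ?thesis .
qed

lemma good_interval_Fobj:
  assumes g: "0 < g" "g \<le> n"
  shows "good_interval n g (Fobj n g X)"
proof -
  have gp: "0 < int g" using g by simp
  have m: "0 \<le> lvl X mod int g" "lvl X mod int g < int g" using gp by auto
  have P: "int (fst (Fobj n g X)) = lvl X mod int g + 1" using Fobj_int(1)[OF g(1)] unfolding Fstart_def by simp
  then have "int (fst (Fobj n g X) - 1) = lvl X mod int g" using m by simp
  then have "int ((fst (Fobj n g X) - 1) mod (n + 1)) = lvl X mod int g mod (int n + 1)"
    by (metis of_nat_Suc of_nat_mod Suc_eq_plus1 add.commute)
  also have "\<dots> = lvl X mod int g" by (rule mod_pos_pos_trivial) (use m g in linarith)+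
  finally have 1: "(fst (Fobj n g X) - 1) mod (n + 1) < g" using m by linarith
  have "int ((snd (Fobj n g X)) mod (n + 1)) = Fend n g X mod (int n + 1)"
    using Fobj_int(2)[OF g(1), of n X] by (metis of_nat_Suc of_nat_mod Suc_eq_plus1 add.commute)
  then have 2: "(snd (Fobj n g X)) mod (n + 1) < g"
    unfolding Fend_mod[OF g] using pos_mod_bound[OF gp, of "int (snd X)"] by linarith
  have "1 \<le> fst (Fobj n g X)" using P m by linarith
  then show ?thesis unfolding good_interval_def using 1 2 by auto
qed

lemma Fobj_inj:
  assumes g: "0 < g" "g \<le> n" and X: "is_vertex g m X" and Y: "is_vertex g m Y"
    and e: "Fobj n g X = Fobj n g Y"
  shows "X = Y"
proof -
  have P: "Fstart g X = Fstart g Y" and Q: "Fend n g X = Fend n g Y"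
    using e Fobj_int[OF g(1), of n] by metis+
  have sX: "1 \<le> snd X" "snd X \<le> g" and sY: "1 \<le> snd Y" "snd Y \<le> g" using X Y unfolding is_vertex_def by auto
  have "int (snd X) mod int g = int (snd Y) mod int g" using Fend_mod[OF g, of X] Fend_mod[OF g, of Y] Q by simp
  then have "int g dvd (int (snd X) - int (snd Y))" by (simp add: mod_eq_dvd_iff)
  then have ss: "snd X = snd Y" using dvd_range_eq[OF sX sY] by simp
  have "(int n + 1) * (lvl X div int g) = (int n + 1) * (lvl Y div int g)" using Q unfolding Fend_eq ss by simp
  then have "lvl X div int g = lvl Y div int g" by simp
  moreover have "lvl X mod int g = lvl Y mod int g" using P unfolding Fstart_def by simp
  ultimately have "lvl X = lvl Y" by (metis div_mult_mod_eq)
  then have "fst X = fst Y" unfolding lvl_def using ss by simp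
  then show ?thesis using ss by (simp add: prod_eq_iff)
qed

section \<open>Morphisms between the representations V_(p,q)\<close>

lemma sum_indicator_mult:
  assumes "finite S"
  shows "(\<Sum>l\<in>S. (if l = c \<and> P l then (1::'k::field) else 0) * f l) = (if c \<in> S \<and> P c then f c else 0)"
proof -
  have "(\<Sum>l\<in>S. (if l = c \<and> P l then (1::'k) else 0) * f l) = (\<Sum>l\<in>S. if l = c then (if P c then f c else 0) else 0)"
    by (rule sum.cong) auto
  also have "\<dots> = (if c \<in> S then (if P c then f c else 0) else 0)" using assms by (simp add: sum.delta)
  finally show ?thesis by simp
qed

lemma sum_mult_indicator:
  assumes "finite S"
  shows "(\<Sum>l\<in>S. f l * (if l = c \<and> P l then (1::'k::field) else 0)) = (if c \<in> S \<and> P c then f c else 0)"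
  using sum_indicator_mult[OF assms, of c P f] by (simp add: mult.commute)

lemma mat_mult_Rep_left:
  "mat_mult (p', q') (Rep n g p' q' a) (M::'k::field mat) x y =
    (if a < g then (if 1 \<le> x \<and> (x - 1) mod (n+1) = a \<and> p' \<le> x - 1 \<and> x - 1 < q' then M (x - 1) y else 0)
     else (if (x + 1) mod (n+1) = (a + 1) mod (n+1) \<and> p' < x + 1 \<and> x + 1 \<le> q' then M (x + 1) y else 0))"
proof (cases "a < g")
  case True
  have "mat_mult (p', q') (Rep n g p' q' a) M x y =
     (\<Sum>l\<in>{p'..q'}. (if l = x - 1 \<and> (1 \<le> x \<and> l mod (n+1) = a \<and> p' \<le> l \<and> l < q') then (1::'k) else 0) * M l y)"
    unfolding mat_mult_def Rep_def using True by (intro sum.cong) auto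
  also have "\<dots> = (if 1 \<le> x \<and> (x - 1) mod (n+1) = a \<and> p' \<le> x - 1 \<and> x - 1 < q' then M (x - 1) y else 0)"
    by (subst sum_indicator_mult) auto
  finally show ?thesis using True by simp
next
  case False
  have "mat_mult (p', q') (Rep n g p' q' a) M x y =
     (\<Sum>l\<in>{p'..q'}. (if l = x + 1 \<and> (l mod (n+1) = (a+1) mod (n+1) \<and> p' < l \<and> l \<le> q') then (1::'k) else 0) * M l y)"
    unfolding mat_mult_def Rep_def using False by (intro sum.cong) auto
  also have "\<dots> = (if (x + 1) mod (n+1) = (a + 1) mod (n+1) \<and> p' < x + 1 \<and> x + 1 \<le> q' then M (x + 1) y else 0)"
    by (subst sum_indicator_mult) auto
  finally show ?thesis using False by simp
qed

lemma mat_mult_Rep_right: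
  "mat_mult (p, q) (M::'k::field mat) (Rep n g p q a) x y =
    (if a < g then (if y mod (n+1) = a \<and> p \<le> y \<and> y < q then M x (y + 1) else 0)
     else (if y mod (n+1) = (a + 1) mod (n+1) \<and> p < y \<and> y \<le> q then M x (y - 1) else 0))"
proof (cases "a < g")
  case True
  have "mat_mult (p, q) M (Rep n g p q a) x y =
     (\<Sum>l\<in>{p..q}. M x l * (if l = y + 1 \<and> (y mod (n+1) = a \<and> p \<le> y \<and> y < q) then (1::'k) else 0))"
    unfolding mat_mult_def Rep_def using True by (intro sum.cong) auto
  also have "\<dots> = (if y mod (n+1) = a \<and> p \<le> y \<and> y < q then M x (y + 1) else 0)"
    by (subst sum_mult_indicator) auto
  finally show ?thesis using True by simp
next
  case False
  have "mat_mult (p, q) M (Rep n g p q a) x y =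
     (\<Sum>l\<in>{p..q}. M x l * (if l = y - 1 \<and> (y mod (n+1) = (a+1) mod (n+1) \<and> p < y \<and> y \<le> q) then (1::'k) else 0))"
    unfolding mat_mult_def Rep_def using False by (intro sum.cong) auto
  also have "\<dots> = (if y mod (n+1) = (a + 1) mod (n+1) \<and> p < y \<and> y \<le> q then M x (y - 1) else 0)"
    by (subst sum_mult_indicator) auto
  finally show ?thesis using False by simp
qed

definition shift_mat :: "nat \<times> nat \<Rightarrow> nat \<times> nat \<Rightarrow> int \<Rightarrow> 'k::field mat" where
  "shift_mat V W d = (\<lambda>x y. if fst V \<le> y \<and> int y + d \<le> int (snd W) \<and> int x = int y + d then 1 else 0)"

lemma shift_mat_commutes_beta:
  assumes gW: "good_interval n g (pW, qW)" and a: "a < g"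
    and dv: "(int n + 1) dvd d" and d1: "int pW - int pV \<le> d" and d2: "int qW - int qV \<le> d"
  shows "mat_mult (pW, qW) (Rep n g pW qW a) (shift_mat (pV, qV) (pW, qW) d :: 'k::field mat)
       = mat_mult (pV, qV) (shift_mat (pV, qV) (pW, qW) d) (Rep n g pV qV a)"
proof (intro ext)
  fix x y
  have "(1 \<le> x \<and> (x - 1) mod (n+1) = a \<and> pW \<le> x - 1 \<and> x - 1 < qW \<and>
          (pV \<le> y \<and> int y + d \<le> int qW \<and> int (x - 1) = int y + d))
      = (y mod (n+1) = a \<and> pV \<le> y \<and> y < qV \<and>
          (pV \<le> y + 1 \<and> int (y + 1) + d \<le> int qW \<and> int x = int (y + 1) + d))"
  proof (cases "int x = int y + 1 + d")
    case xy: True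
    show ?thesis
    proof (cases "x = 0")
      case True
      then show ?thesis using xy d1 gW unfolding good_interval_def by auto
    next
      case False
      then have x1: "int (x - 1) = int y + d" "1 \<le> x" using xy by auto
      have "(x - 1) mod (n+1) = y mod (n+1)" using mod_eq_if_diff_dvd[OF x1(1) dv] .
      then show ?thesis using xy x1 d1 d2 by auto
    qed
  qed auto
  then show "mat_mult (pW, qW) (Rep n g pW qW a) (shift_mat (pV, qV) (pW, qW) d :: 'k mat) x y
       = mat_mult (pV, qV) (shift_mat (pV, qV) (pW, qW) d) (Rep n g pV qV a) x y"
    unfolding mat_mult_Rep_left mat_mult_Rep_right shift_mat_def using a
    by (simp only: if_True fst_conv snd_conv) auto
qed

lemma shift_mat_commutes_alpha:
  assumes gV: "good_interval n g (pV, qV)" and gW: "good_interval n g (pW, qW)"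
    and a: "\<not> a < g" "a \<le> n"
    and dv: "(int n + 1) dvd d" and d1: "int pW - int pV \<le> d" and d2: "int qW - int qV \<le> d"
  shows "mat_mult (pW, qW) (Rep n g pW qW a) (shift_mat (pV, qV) (pW, qW) d :: 'k::field mat)
       = mat_mult (pV, qV) (shift_mat (pV, qV) (pW, qW) d) (Rep n g pV qV a)"
proof (intro ext)
  fix x y
  have "((x + 1) mod (n+1) = (a + 1) mod (n+1) \<and> pW < x + 1 \<and> x + 1 \<le> qW \<and>
          (pV \<le> y \<and> int y + d \<le> int qW \<and> int (x + 1) = int y + d))
      = (y mod (n+1) = (a + 1) mod (n+1) \<and> pV < y \<and> y \<le> qV \<and>
          (pV \<le> y - 1 \<and> int (y - 1) + d \<le> int qW \<and> int x = int (y - 1) + d))"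
  proof (cases "int x + 1 = int y + d")
    case xy: True
    have xym: "(x + 1) mod (n+1) = y mod (n+1)" using mod_eq_if_diff_dvd[of "x+1" y d n] xy dv by simp
    show ?thesis
    proof
      assume L: "(x + 1) mod (n+1) = (a + 1) mod (n+1) \<and> pW < x + 1 \<and> x + 1 \<le> qW \<and>
          (pV \<le> y \<and> int y + d \<le> int qW \<and> int (x + 1) = int y + d)"
      have y1: "1 \<le> y" using L gV unfolding good_interval_def by auto
      have "(y - 1) mod (n+1) = a" using mod_pred_eq[OF y1 a(2)] L xym by simp
      then have "pV \<noteq> y" using gV a(1) unfolding good_interval_def by auto
      then show "y mod (n+1) = (a + 1) mod (n+1) \<and> pV < y \<and> y \<le> qV \<and>
          (pV \<le> y - 1 \<and> int (y - 1) + d \<le> int qW \<and> int x = int (y - 1) + d)"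
        using L xym y1 d2 xy by auto
    next
      assume R: "y mod (n+1) = (a + 1) mod (n+1) \<and> pV < y \<and> y \<le> qV \<and>
          (pV \<le> y - 1 \<and> int (y - 1) + d \<le> int qW \<and> int x = int (y - 1) + d)"
      have y1: "1 \<le> y" using R by auto
      have ym: "(y - 1) mod (n+1) = a" using mod_pred_eq[OF y1 a(2)] R by simp
      have "x mod (n+1) = (y - 1) mod (n+1)" using mod_eq_if_diff_dvd[of x "y - 1" d n] R dv by simp
      then have "x \<noteq> qW" using ym gW a(1) unfolding good_interval_def by auto
      then show "(x + 1) mod (n+1) = (a + 1) mod (n+1) \<and> pW < x + 1 \<and> x + 1 \<le> qW \<and>
          (pV \<le> y \<and> int y + d \<le> int qW \<and> int (x + 1) = int y + d)"
        using R xy xym d1 y1 by (auto simp: of_nat_diff)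
    qed
  qed auto
  then show "mat_mult (pW, qW) (Rep n g pW qW a) (shift_mat (pV, qV) (pW, qW) d :: 'k mat) x y
       = mat_mult (pV, qV) (shift_mat (pV, qV) (pW, qW) d) (Rep n g pV qV a) x y"
    unfolding mat_mult_Rep_left mat_mult_Rep_right shift_mat_def using a(1)
    by (simp only: if_False fst_conv snd_conv) auto
qed

lemma shift_mat_HomK:
  assumes gV: "good_interval n g (pV, qV)" and gW: "good_interval n g (pW, qW)"
    and dv: "(int n + 1) dvd d" and d1: "int pW - int pV \<le> d" and d2: "int qW - int qV \<le> d"
  shows "(shift_mat (pV, qV) (pW, qW) d :: 'k::field mat) \<in> HomK n g (pV, qV) (pW, qW)"
proof -
  have "pV \<le> j \<and> j \<le> qV \<and> pW \<le> i \<and> i \<le> qW \<and> i mod (n+1) = j mod (n+1)"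
    if "(shift_mat (pV, qV) (pW, qW) d :: 'k mat) i j \<noteq> 0" for i j
  proof -
    have h: "pV \<le> j" "int j + d \<le> int qW" "int i = int j + d"
      using that unfolding shift_mat_def by (auto split: if_splits)
    then show ?thesis using d1 d2 mod_eq_if_diff_dvd[OF h(3) dv] by linarith
  qed
  then show ?thesis unfolding HomK_def
    using shift_mat_commutes_beta[OF gW _ dv d1 d2] shift_mat_commutes_alpha[OF gV gW _ _ dv d1 d2]
    by auto
qed

lemma mat_mult_lincomb_right:
  "mat_mult pq A (\<lambda>l j. \<Sum>x\<in>S. c x * B x l j) = (\<lambda>i j. \<Sum>x\<in>S. c x * mat_mult pq A (B x) i j)"
  unfolding mat_mult_def
  by (rule ext, rule ext) (simp add: sum_distrib_left mult_ac sum.swap[of _ S])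

lemma mat_mult_lincomb_left:
  "mat_mult pq (\<lambda>i l. \<Sum>x\<in>S. c x * B x i l) A = (\<lambda>i j. \<Sum>x\<in>S. c x * mat_mult pq (B x) A i j)"
  unfolding mat_mult_def
  by (rule ext, rule ext) (simp add: sum_distrib_left sum_distrib_right mult_ac sum.swap[of _ S])

lemma HomK_lincomb:
  assumes "\<forall>x\<in>S. M x \<in> HomK n g V W"
  shows "(\<lambda>i j. \<Sum>x\<in>S. c x * M x i j) \<in> HomK n g V W"
proof -
  have supp: "\<forall>i j. (\<Sum>x\<in>S. c x * M x i j) \<noteq> 0 \<longrightarrow> fst V \<le> j \<and> j \<le> snd V \<and> fst W \<le> i \<and> i \<le> snd W
                        \<and> i mod (n+1) = j mod (n+1)"
  proof (intro allI impI)
    fix i j assume "(\<Sum>x\<in>S. c x * M x i j) \<noteq> 0"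
    then obtain x where "x \<in> S" "c x * M x i j \<noteq> 0" by (meson sum.not_neutral_contains_not_neutral)
    then have "M x i j \<noteq> 0" "M x \<in> HomK n g V W" using assms by auto
    then show "fst V \<le> j \<and> j \<le> snd V \<and> fst W \<le> i \<and> i \<le> snd W \<and> i mod (n+1) = j mod (n+1)"
      unfolding HomK_def by auto
  qed
  have "mat_mult W (Rep n g (fst W) (snd W) a) (\<lambda>i j. \<Sum>x\<in>S. c x * M x i j)
      = mat_mult V (\<lambda>i j. \<Sum>x\<in>S. c x * M x i j) (Rep n g (fst V) (snd V) a)" if "a \<le> n" for a
  proof -
    have e: "\<forall>x\<in>S. mat_mult W (Rep n g (fst W) (snd W) a) (M x) = mat_mult V (M x) (Rep n g (fst V) (snd V) a)"
      using assms that unfolding HomK_def by auto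
    show ?thesis unfolding mat_mult_lincomb_right mat_mult_lincomb_left
      using e by (intro ext sum.cong) auto
  qed
  then show ?thesis unfolding HomK_def using supp by auto
qed

lemma HomK_diff:
  assumes "M1 \<in> HomK n g V W" "M2 \<in> HomK n g V W"
  shows "(\<lambda>i j. M1 i j - M2 i j) \<in> HomK n g V W"
proof -
  let ?c = "\<lambda>b::bool. if b then (1::'a) else -1"
  let ?M = "\<lambda>b::bool. if b then M1 else M2"
  have "(\<lambda>i j. \<Sum>x\<in>UNIV. ?c x * ?M x i j) \<in> HomK n g V W"
    by (rule HomK_lincomb) (use assms in auto)
  moreover have "(\<lambda>i j. \<Sum>x\<in>UNIV. ?c x * ?M x i j) = (\<lambda>i j. M1 i j - M2 i j)"
    by (simp add: UNIV_bool)
  ultimately show ?thesis by simp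
qed

lemma HomK_beta_square:
  assumes M: "M \<in> HomK n g (pV, qV) (pW, qW)" and um: "u mod (n+1) < g"
    and dv: "(int n + 1) dvd d" and k: "int k = int u + d"
  shows "(if pW \<le> k \<and> k < qW then M k u else 0) = (if pV \<le> u \<and> u < qV then M (k+1) (u+1) else 0)"
proof -
  let ?a = "u mod (n+1)"
  have an: "?a \<le> n" by (simp add: less_Suc_eq_le)
  have eq: "mat_mult (pW, qW) (Rep n g pW qW ?a) M = mat_mult (pV, qV) M (Rep n g pV qV ?a)"
    using M an unfolding HomK_def by auto
  have km: "k mod (n+1) = ?a" using mod_eq_if_diff_dvd[OF k dv] .
  have "mat_mult (pW, qW) (Rep n g pW qW ?a) M (k+1) u = (if pW \<le> k \<and> k < qW then M k u else 0)"
    unfolding mat_mult_Rep_left using um km by simp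
  moreover have "mat_mult (pV, qV) M (Rep n g pV qV ?a) (k+1) u = (if pV \<le> u \<and> u < qV then M (k+1) (u+1) else 0)"
    unfolding mat_mult_Rep_right using um by simp
  ultimately show ?thesis using eq by metis
qed

lemma HomK_alpha_square:
  assumes M: "M \<in> HomK n g (pV, qV) (pW, qW)" and um: "\<not> u mod (n+1) < g"
    and dv: "(int n + 1) dvd d" and k: "int k = int u + d"
  shows "(if pW \<le> k \<and> k < qW then M (k+1) (u+1) else 0) = (if pV \<le> u \<and> u < qV then M k u else 0)"
proof -
  let ?a = "u mod (n+1)"
  have an: "?a \<le> n" by (simp add: less_Suc_eq_le)
  have eq: "mat_mult (pW, qW) (Rep n g pW qW ?a) M = mat_mult (pV, qV) M (Rep n g pV qV ?a)"
    using M an unfolding HomK_def by auto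
  have km: "k mod (n+1) = ?a" using mod_eq_if_diff_dvd[OF k dv] .
  have k1: "(k + 1) mod (n+1) = (?a + 1) mod (n+1)" using km by (metis mod_Suc_eq Suc_eq_plus1)
  have u1: "(u + 1) mod (n+1) = (?a + 1) mod (n+1)" by (metis mod_Suc_eq Suc_eq_plus1)
  have "mat_mult (pW, qW) (Rep n g pW qW ?a) M k (u+1) = (if pW \<le> k \<and> k < qW then M (k+1) (u+1) else 0)"
    unfolding mat_mult_Rep_left using um k1 by auto
  moreover have "mat_mult (pV, qV) M (Rep n g pV qV ?a) k (u+1) = (if pV \<le> u \<and> u < qV then M k u else 0)"
    unfolding mat_mult_Rep_right using um u1 by auto
  ultimately show ?thesis using eq by metis
qed

lemma HomK_supp:
  assumes "M \<in> HomK n g (pV, qV) (pW, qW)" "M i j \<noteq> 0"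
  shows "pV \<le> j \<and> j \<le> qV \<and> pW \<le> i \<and> i \<le> qW \<and> i mod (n+1) = j mod (n+1)"
  using assms unfolding HomK_def by auto

lemma HomK_diagonal_step:
  assumes M: "M \<in> HomK n g (pV, qV) (pW, qW)"
    and dv: "(int n + 1) dvd d" and k: "int k = int u + d"
    and u: "pV \<le> u" "u < qV" and kW: "pW \<le> k" "k < qW"
  shows "M (k+1) (u+1) = M k u"
  using HomK_beta_square[OF M _ dv k] HomK_alpha_square[OF M _ dv k] u kW
  by (cases "u mod (n+1) < g") auto

lemma HomK_diagonal_lower_edge:
  assumes gW: "good_interval n g (pW, qW)" and M: "M \<in> HomK n g (pV, qV) (pW, qW)"
    and dv: "(int n + 1) dvd d" and k: "int k = int u + d"
    and u: "pV \<le> u" and nz: "M (k+1) (u+1) \<noteq> 0"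
  shows "pW \<le> k"
proof (cases "u mod (n+1) < g")
  case True
  have "u < qV" using HomK_supp[OF M nz] by simp
  then show ?thesis using HomK_beta_square[OF M True dv k] u nz by (auto split: if_splits)
next
  case False
  show ?thesis
  proof (rule ccontr)
    assume "\<not> pW \<le> k"
    then have "k + 1 = pW" using HomK_supp[OF M nz] by simp
    then have "(pW - 1) mod (n+1) = u mod (n+1)" using mod_eq_if_diff_dvd[OF k dv] by auto
    then show False using gW False unfolding good_interval_def by simp
  qed
qed

lemma HomK_diagonal_upper_edge:
  assumes gV: "good_interval n g (pV, qV)" and M: "M \<in> HomK n g (pV, qV) (pW, qW)"
    and dv: "(int n + 1) dvd d" and k: "int k = int qV + d" and nz: "M k qV \<noteq> 0"
  shows "qW \<le> k"
proof -
  have "qV mod (n+1) < g" using gV unfolding good_interval_def by simp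
  then show ?thesis using HomK_beta_square[OF M _ dv k] HomK_supp[OF M nz] nz
    by (auto split: if_splits)
qed

text \<open>A nonzero entry of a morphism propagates down its diagonal to the first column, and
  up from there until the diagonal leaves the target.\<close>

lemma HomK_diagonal_down:
  assumes gW: "good_interval n g (pW, qW)" and M: "M \<in> HomK n g (pV, qV) (pW, qW)"
    and dv: "(int n + 1) dvd d" and xy: "int x = int y + d" and nz: "M x y \<noteq> 0"
  shows "0 \<le> int pV + d \<and> M (nat (int pV + d)) pV \<noteq> 0"
proof -
  define Q where "Q u = (0 \<le> int u + d \<and> M (nat (int u + d)) u \<noteq> 0)" for u
  have Qsupp: "pV \<le> u \<and> u \<le> qV \<and> pW \<le> nat (int u + d) \<and> nat (int u + d) \<le> qW" if "Q u" for u
    using HomK_supp[OF M] that unfolding Q_def by blast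
  have "Q pV"
  proof (rule inc_induct[of pV y Q])
    show "pV \<le> y" using HomK_supp[OF M nz] by simp
    show "Q y" unfolding Q_def using xy nz by (metis nat_int of_nat_0_le_iff)
  next
    fix u assume u: "pV \<le> u" "u < y" and QS: "Q (Suc u)"
    define k where "k = nat (int u + d)"
    have "1 \<le> pW" using gW unfolding good_interval_def by simp
    then have k: "int k = int u + d" using Qsupp[OF QS] unfolding k_def by linarith
    have kS: "nat (int (Suc u) + d) = k + 1" using k by linarith
    have Mk1: "M (k+1) (u+1) \<noteq> 0" and "k + 1 \<le> qW"
      using QS Qsupp[OF QS] unfolding Q_def kS by simp_all
    moreover have "pW \<le> k" by (rule HomK_diagonal_lower_edge[OF gW M dv k u(1) Mk1])
    moreover have "u < qV" using Qsupp[OF QS] by simp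
    ultimately have "M k u \<noteq> 0" using HomK_diagonal_step[OF M dv k u(1)] by simp
    then show "Q u" unfolding Q_def k_def using k by simp
  qed
  then show ?thesis unfolding Q_def .
qed

lemma HomK_diagonal_up:
  assumes gV: "good_interval n g (pV, qV)" and M: "M \<in> HomK n g (pV, qV) (pW, qW)"
    and dv: "(int n + 1) dvd d" and d0: "0 \<le> int pV + d" and nz: "M (nat (int pV + d)) pV \<noteq> 0"
  shows "int qW - int qV \<le> d"
proof (rule ccontr)
  assume nu: "\<not> int qW - int qV \<le> d"
  define Q where "Q u = (0 \<le> int u + d \<and> M (nat (int u + d)) u \<noteq> 0)" for u
  have "Q qV"
  proof (rule dec_induct[of pV qV Q])
    show "pV \<le> qV" using HomK_supp[OF M nz] by simp
    show "Q pV" unfolding Q_def using d0 nz by simp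
  next
    fix u assume u: "pV \<le> u" "u < qV" and Qu: "Q u"
    define k where "k = nat (int u + d)"
    have k: "int k = int u + d" unfolding k_def using Qu unfolding Q_def by simp
    have "M k u \<noteq> 0" "pW \<le> k" using Qu HomK_supp[OF M] unfolding Q_def k_def by auto
    moreover have "k < qW" using k u nu by linarith
    ultimately have "M (k+1) (u+1) \<noteq> 0" using HomK_diagonal_step[OF M dv k u] by simp
    moreover have "nat (int (Suc u) + d) = k + 1" using k by linarith
    ultimately show "Q (Suc u)" unfolding Q_def using k by simp
  qed
  then obtain k where k: "int k = int qV + d" and "M k qV \<noteq> 0" unfolding Q_def
    by (metis nat_eq_iff2)
  then have "qW \<le> k" by (rule HomK_diagonal_upper_edge[OF gV M dv])
  then show False using k nu by linarith
qed

lemma HomK_eq_zeroI: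
  assumes gV: "good_interval n g (pV, qV)" and gW: "good_interval n g (pW, qW)"
    and M: "M \<in> HomK n g (pV, qV) (pW, qW)"
    and z: "\<And>d. (int n + 1) dvd d \<Longrightarrow> int pW - int pV \<le> d \<Longrightarrow> int qW - int qV \<le> d \<Longrightarrow> int pV + d \<le> int qW
              \<Longrightarrow> M (nat (int pV + d)) pV = 0"
  shows "M x y = 0"
proof (rule ccontr)
  assume nz: "M x y \<noteq> 0"
  define d where "d = int x - int y"
  have "x mod (n+1) = y mod (n+1)" using HomK_supp[OF M nz] by simp
  then have dv: "(int n + 1) dvd d" unfolding d_def
    by (metis mod_eq_dvd_iff of_nat_Suc of_nat_mod Suc_eq_plus1 add.commute)
  have down: "0 \<le> int pV + d" "M (nat (int pV + d)) pV \<noteq> 0"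
    using HomK_diagonal_down[OF gW M dv _ nz] unfolding d_def by simp_all
  have "pW \<le> nat (int pV + d)" "nat (int pV + d) \<le> qW" using HomK_supp[OF M down(2)] by simp_all
  moreover have "int qW - int qV \<le> d" by (rule HomK_diagonal_up[OF gV M dv down])
  ultimately have "M (nat (int pV + d)) pV = 0" using down(1) by (intro z[OF dv]) linarith+
  then show False using down(2) by simp
qed

definition shift_degrees :: "nat \<Rightarrow> nat \<times> nat \<Rightarrow> nat \<times> nat \<Rightarrow> int set" where
  "shift_degrees n V W = {d. (int n + 1) dvd d \<and> int (fst W) - int (fst V) \<le> d \<and> int (snd W) - int (snd V) \<le> d
                   \<and> int (fst V) + d \<le> int (snd W)}"

lemma finite_shift_degrees: "finite (shift_degrees n V W)"
  by (rule finite_subset[of _ "{int (fst W) - int (fst V) .. int (snd W) - int (fst V)}"]) (auto simp: shift_degrees_def)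

lemma HomK_eq_sum_shift_mat:
  assumes gV: "good_interval n g (pV, qV)" and gW: "good_interval n g (pW, qW)"
    and M: "M \<in> HomK n g (pV, qV) (pW, qW)"
  shows "M = (\<lambda>x y. \<Sum>d\<in>shift_degrees n (pV, qV) (pW, qW). M (nat (int pV + d)) pV * shift_mat (pV, qV) (pW, qW) d x y)"
proof -
  let ?D = "shift_degrees n (pV, qV) (pW, qW)"
  let ?R = "(\<lambda>x y. \<Sum>d\<in>?D. M (nat (int pV + d)) pV * shift_mat (pV, qV) (pW, qW) d x y)"
  have R: "?R \<in> HomK n g (pV, qV) (pW, qW)"
  proof (rule HomK_lincomb[where S="?D" and c="\<lambda>d. M (nat (int pV + d)) pV"
      and M="\<lambda>d. shift_mat (pV, qV) (pW, qW) d", simplified], intro ballI)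
    fix d assume "d \<in> ?D"
    then have h: "(int n + 1) dvd d" "int pW - int pV \<le> d" "int qW - int qV \<le> d" unfolding shift_degrees_def by auto
    show "shift_mat (pV, qV) (pW, qW) d \<in> HomK n g (pV, qV) (pW, qW)"
      by (rule shift_mat_HomK[OF gV gW h])
  qed
  have MR: "(\<lambda>i j. M i j - ?R i j) \<in> HomK n g (pV, qV) (pW, qW)" by (rule HomK_diff[OF M R])
  have z: "M x y - ?R x y = 0" for x y
  proof (rule HomK_eq_zeroI[OF gV gW MR, of x y])
    fix d assume h: "(int n + 1) dvd d" "int pW - int pV \<le> d" "int qW - int qV \<le> d" "int pV + d \<le> int qW"
    have dD: "d \<in> ?D" using h unfolding shift_degrees_def by auto
    have pos: "0 \<le> int pV + d" using h(2) by linarith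
    have "?R (nat (int pV + d)) pV = (\<Sum>d'\<in>?D. if d' = d then M (nat (int pV + d)) pV else 0)"
    proof (rule sum.cong)
      fix d' assume d': "d' \<in> ?D"
      have "int pV + d' \<le> int qW" using d' unfolding shift_degrees_def by auto
      then show "M (nat (int pV + d')) pV * shift_mat (pV, qV) (pW, qW) d' (nat (int pV + d)) pV =
          (if d' = d then M (nat (int pV + d)) pV else 0)"
        unfolding shift_mat_def using pos by auto
    qed simp
    also have "\<dots> = M (nat (int pV + d)) pV" using dD finite_shift_degrees by (simp add: sum.delta')
    finally show "M (nat (int pV + d)) pV - ?R (nat (int pV + d)) pV = 0" by simp
  qed
  have "M x y = ?R x y" for x y using z[of x y] by (simp only: right_minus_eq)
  then show ?thesis by (intro ext)
qed

section \<open>The functor on paths\<close>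

fun num_pi :: "arr list \<Rightarrow> nat" where
  "num_pi [] = 0" | "num_pi (Pi r s # w) = Suc (num_pi w)" | "num_pi (Rho r s # w) = num_pi w"

fun num_rho :: "arr list \<Rightarrow> nat" where
  "num_rho [] = 0" | "num_rho (Pi r s # w) = num_rho w" | "num_rho (Rho r s # w) = Suc (num_rho w)"

lemma num_pi_append: "num_pi (u @ v) = num_pi u + num_pi v"
  by (induction u rule: num_pi.induct) auto

lemma num_rho_append: "num_rho (u @ v) = num_rho u + num_rho v"
  by (induction u rule: num_rho.induct) auto

lemma is_path_vertex: "is_path g m X w Y \<Longrightarrow> is_vertex g m X \<and> is_vertex g m Y"
proof (induction w arbitrary: X)
  case Nil then show ?case by auto
next
  case (Cons a w)
  then show ?case using Cons.IH[of "tgt g a"] by (auto simp: is_arrow_def)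
qed

lemma is_path_append: "is_path g m X (u @ v) Z = (\<exists>Y. is_path g m X u Y \<and> is_path g m Y v Z)"
proof (induction u arbitrary: X)
  case Nil
  then show ?case using is_path_vertex[of g m X v Z] by auto
next
  case (Cons a u)
  then show ?case by auto
qed

lemma path_endpoint:
  assumes g: "0 < g"
  shows "is_path g m X w Y \<Longrightarrow> int (fst Y) = int (fst X) + int (num_rho w) - int (num_pi w)
     \<and> int g dvd (int (snd X) - int (num_pi w) - int (snd Y))"
proof (induction w arbitrary: X)
  case Nil then show ?case by simp
next
  case (Cons a w)
  show ?case
  proof (cases a)
    case (Pi r s)
    have X: "X = (r + 1, splus g s)" and pw: "is_path g m (r, s) w Y" using Cons.prems Pi by auto
    note IH = Cons.IH[OF pw]
    have "int (splus g s) - 1 - int s = int g * (- (int s div int g))"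
      unfolding splus_def using minus_mod_eq_mult_div[of "int s" "int g"] by (simp add: of_nat_mod algebra_simps)
    then have e2: "int (snd X) - int (num_pi (a # w)) - int (snd Y)
        = int g * (- (int s div int g)) + (int s - int (num_pi w) - int (snd Y))"
      unfolding X Pi by simp
    have "int g dvd (int (snd X) - int (num_pi (a # w)) - int (snd Y))"
      unfolding e2 using IH by (intro dvd_add) auto
    moreover have "int (fst Y) = int (fst X) + int (num_rho (a # w)) - int (num_pi (a # w))"
      using IH unfolding X Pi by simp
    ultimately show ?thesis by simp
  next
    case (Rho r s)
    have X: "X = (r, s)" and pw: "is_path g m (r + 1, s) w Y" using Cons.prems Rho by auto
    note IH = Cons.IH[OF pw]
    show ?thesis using IH unfolding X Rho by auto
  qed
qed

text \<open>Arrows Pi act by truncation and arrows Rho by a shift by 0 or n + 1, so F of a path only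
  depends on its start and its numbers of arrows Pi and Rho.\<close>

definition path_shift :: "nat \<Rightarrow> nat \<Rightarrow> nat \<times> nat \<Rightarrow> nat \<Rightarrow> int" where
  "path_shift n g X i = lvl_base n g X - (int n + 1) * ((lvl X - int i) div int g)"

definition path_top :: "nat \<Rightarrow> nat \<Rightarrow> nat \<times> nat \<Rightarrow> nat \<Rightarrow> int" where
  "path_top n g X j = stretch n g (int (snd X) - int j) - lvl_base n g X"

definition path_mat :: "nat \<Rightarrow> nat \<Rightarrow> nat \<times> nat \<Rightarrow> nat \<Rightarrow> nat \<Rightarrow> 'k::field mat" where
  "path_mat n g X i j = (\<lambda>a b.
     if Fstart g X \<le> int b \<and> int b \<le> path_top n g X j \<and> int a = int b + path_shift n g X i then 1 else 0)"

lemma path_top_le_Fend: "0 < g \<Longrightarrow> g \<le> n + 1 \<Longrightarrow> path_top n g X j \<le> Fend n g X"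
  unfolding path_top_def Fend_def using stretch_mono[where x="int (snd X) - int j" and y="int (snd X)"] by simp

lemma lvl_Pi_src: "lvl (r + 1, splus g s) = lvl (r, s) + int g * (- (int s div int g))"
proof -
  have "int s = int g * (int s div int g) + int s mod int g" by simp
  then show ?thesis unfolding lvl_def splus_def by (simp add: of_nat_mod algebra_simps)
qed

lemma path_mat_params_Pi:
  fixes r s :: nat
  assumes g: "0 < g" "g \<le> n + 1"
  defines "X \<equiv> (r + 1, splus g s)" and "Z \<equiv> (r, s)"
  shows "Fstart g X = Fstart g Z" "path_shift n g X i = path_shift n g Z i"
    "path_top n g X (Suc j) = path_top n g Z j" "Fend n g Z \<le> Fend n g X"
proof -
  define k where "k = - (int s div int g)"
  have A: "lvl X = lvl Z + int g * k" unfolding X_def Z_def k_def using lvl_Pi_src by simp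
  have o: "lvl_base n g X = lvl_base n g Z + (int n + 1) * k" unfolding lvl_base_def A using g
    by (simp add: algebra_simps)
  show "Fstart g X = Fstart g Z" unfolding Fstart_def A using g by simp
  have "(lvl X - int i) div int g = (lvl Z - int i + int g * k) div int g"
    unfolding A by (simp add: algebra_simps)
  also have "\<dots> = (lvl Z - int i) div int g + k" using g by simp
  finally have "(lvl X - int i) div int g = (lvl Z - int i) div int g + k" .
  then show "path_shift n g X i = path_shift n g Z i" unfolding path_shift_def o by (simp add: algebra_simps)
  have sp: "int (snd X) = int s + int g * k + 1" unfolding X_def k_def splus_def
    using minus_mod_eq_mult_div[of "int s" "int g"] by (simp add: of_nat_mod algebra_simps)
  have "stretch n g (int (snd X) - int (Suc j)) = stretch n g (int s - int j) + (int n + 1) * k"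
    using stretch_add_mult[OF g(1), where y="int s - int j" and k=k] sp by (simp add: algebra_simps)
  then show "path_top n g X (Suc j) = path_top n g Z j" unfolding path_top_def o Z_def by simp
  have "stretch n g (int (snd X)) = stretch n g (int s + 1) + (int n + 1) * k"
    using stretch_add_mult[OF g(1), where y="int s + 1" and k=k] sp by (simp add: algebra_simps)
  moreover have "stretch n g (int s) \<le> stretch n g (int s + 1)" using stretch_mono[OF g] by simp
  ultimately show "Fend n g Z \<le> Fend n g X" unfolding Fend_def o Z_def by simp
qed

lemma path_mat_params_Rho:
  fixes r s :: nat
  assumes g: "0 < g" "g \<le> n"
  defines "X \<equiv> (r, s)" and "Z \<equiv> (r + 1, s)"
    and "\<delta> \<equiv> (if Fstart g (r, s) = 1 then int n + 1 else 0)"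
  shows "path_shift n g Z i + \<delta> = path_shift n g X (Suc i)" "path_top n g Z j = path_top n g X j + \<delta>"
    "Fend n g Z = Fend n g X + \<delta>"
    "Fstart g Z \<le> Fstart g X + \<delta>"
proof -
  have gp: "0 < int g" using g by simp
  have A: "lvl Z = lvl X - 1" unfolding lvl_def X_def Z_def by simp
  have P1: "(Fstart g (r, s) = 1) = (lvl X mod int g = 0)" unfolding Fstart_def X_def by simp
  have o: "lvl_base n g Z = lvl_base n g X - \<delta>"
    unfolding lvl_base_def A \<delta>_def P1 div_mod_pred_int[OF gp] by (simp add: algebra_simps)
  have o2: "lvl_base n g (r + 1, s) = lvl_base n g (r, s) - \<delta>" using o unfolding X_def Z_def by simp
  have e: "lvl Z - int i = lvl X - int (Suc i)" using A by (simp add: algebra_simps)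
  show "path_shift n g Z i + \<delta> = path_shift n g X (Suc i)" unfolding path_shift_def e using o by linarith
  show "path_top n g Z j = path_top n g X j + \<delta>" unfolding path_top_def X_def Z_def snd_conv using o2 by linarith
  show "Fend n g Z = Fend n g X + \<delta>" unfolding Fend_def X_def Z_def snd_conv using o2 by linarith
  have m: "0 \<le> lvl X mod int g" "lvl X mod int g < int g" using gp by auto
  show "Fstart g Z \<le> Fstart g X + \<delta>"
    using g m unfolding \<delta>_def P1 Fstart_def A div_mod_pred_int[OF gp] unfolding X_def by auto
qed

lemma mat_mult_Farr_Pi:
  "mat_mult pq A (Farr n g (Pi r s) :: 'k::field mat) x y =
    (if fst pq \<le> y \<and> y \<le> snd pq \<and> fst (Fobj n g (r + 1, splus g s)) \<le> y \<and> y \<le> snd (Fobj n g (r + 1, splus g s))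
        \<and> fst (Fobj n g (r, s)) \<le> y \<and> y \<le> snd (Fobj n g (r, s)) then A x y else 0)"
proof -
  have "mat_mult pq A (Farr n g (Pi r s) :: 'k mat) x y = (\<Sum>l\<in>{fst pq..snd pq}. A x l *
     (if l = y \<and> (fst (Fobj n g (r + 1, splus g s)) \<le> y \<and> y \<le> snd (Fobj n g (r + 1, splus g s))
        \<and> fst (Fobj n g (r, s)) \<le> y \<and> y \<le> snd (Fobj n g (r, s))) then 1 else 0))"
    unfolding mat_mult_def Farr.simps Let_def by (intro sum.cong) auto
  then show ?thesis by (simp only:) (subst sum_mult_indicator, auto)
qed

lemma mat_mult_Farr_Rho:
  "mat_mult pq A (Farr n g (Rho r s) :: 'k::field mat) x y =
    (if fst pq \<le> (if fst (Fobj n g (r, s)) = 1 then y + (n + 1) else y) \<and> (if fst (Fobj n g (r, s)) = 1 then y + (n + 1) else y) \<le> snd pq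
        \<and> fst (Fobj n g (r, s)) \<le> y \<and> y \<le> snd (Fobj n g (r, s))
     then A x (if fst (Fobj n g (r, s)) = 1 then y + (n + 1) else y) else 0)"
proof -
  have "mat_mult pq A (Farr n g (Rho r s) :: 'k mat) x y = (\<Sum>l\<in>{fst pq..snd pq}. A x l *
     (if l = (if fst (Fobj n g (r, s)) = 1 then y + (n + 1) else y) \<and> (fst (Fobj n g (r, s)) \<le> y \<and> y \<le> snd (Fobj n g (r, s))) then 1 else 0))"
    unfolding mat_mult_def Farr.simps Let_def by (intro sum.cong) auto
  then show ?thesis by (simp only:) (subst sum_mult_indicator, auto)
qed

lemma path_mat_Pi_step:
  assumes g: "0 < g" "g \<le> n"
  shows "mat_mult (Fobj n g (r, s)) (path_mat n g (r, s) i j) (Farr n g (Pi r s) :: 'k::field mat)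
       = path_mat n g (r + 1, splus g s) i (Suc j)"
proof (intro ext)
  fix x y
  have gn: "g \<le> n + 1" using g by simp
  note ps = path_mat_params_Pi[OF g(1) gn, of r s]
  have hq: "path_top n g (r, s) j \<le> Fend n g (r, s)" by (rule path_top_le_Fend[OF g(1) gn])
  have rhs: "(path_mat n g (r + 1, splus g s) i (Suc j) :: 'k mat) = path_mat n g (r, s) i j"
    unfolding path_mat_def ps by simp
  have "Fstart g (r, s) \<le> int y \<and> int y \<le> path_top n g (r, s) j \<Longrightarrow>
      fst (Fobj n g (r + 1, splus g s)) \<le> y \<and> y \<le> snd (Fobj n g (r + 1, splus g s))
      \<and> fst (Fobj n g (r, s)) \<le> y \<and> y \<le> snd (Fobj n g (r, s))"
    unfolding Fobj_le_iff[OF g(1)] using ps hq by simp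
  then show "mat_mult (Fobj n g (r, s)) (path_mat n g (r, s) i j) (Farr n g (Pi r s) :: 'k mat) x y
       = path_mat n g (r + 1, splus g s) i (Suc j) x y"
    unfolding mat_mult_Farr_Pi rhs by (auto simp: path_mat_def)
qed

lemma path_mat_Rho_step:
  assumes g: "0 < g" "g \<le> n"
  shows "mat_mult (Fobj n g (r + 1, s)) (path_mat n g (r + 1, s) i j) (Farr n g (Rho r s) :: 'k::field mat)
       = path_mat n g (r, s) (Suc i) j"
proof (intro ext)
  fix x y
  have gn: "g \<le> n + 1" using g by simp
  have hq: "path_top n g (r, s) j \<le> Fend n g (r, s)" by (rule path_top_le_Fend[OF g(1) gn])
  define \<delta> where "\<delta> = (if Fstart g (r, s) = 1 then int n + 1 else 0)"
  define L where "L = (if Fstart g (r, s) = 1 then y + (n + 1) else y)"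
  have Li: "int L = int y + \<delta>" unfolding L_def \<delta>_def by simp
  have rs: "path_shift n g (r + 1, s) i + \<delta> = path_shift n g (r, s) (Suc i)"
    "path_top n g (r + 1, s) j = path_top n g (r, s) j + \<delta>"
    "Fend n g (r + 1, s) = Fend n g (r, s) + \<delta>" "Fstart g (r + 1, s) \<le> Fstart g (r, s) + \<delta>"
    using path_mat_params_Rho[OF g, of r s] unfolding \<delta>_def by auto
  have lhs: "mat_mult (Fobj n g (r + 1, s)) (path_mat n g (r + 1, s) i j) (Farr n g (Rho r s) :: 'k mat) x y =
    (if fst (Fobj n g (r + 1, s)) \<le> L \<and> L \<le> snd (Fobj n g (r + 1, s))
      \<and> fst (Fobj n g (r, s)) \<le> y \<and> y \<le> snd (Fobj n g (r, s))
     then path_mat n g (r + 1, s) i j x L else 0)"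
    unfolding mat_mult_Farr_Rho Fobj_le_iff(3)[OF g(1)] L_def by simp
  show "mat_mult (Fobj n g (r + 1, s)) (path_mat n g (r + 1, s) i j) (Farr n g (Rho r s) :: 'k mat) x y
       = path_mat n g (r, s) (Suc i) j x y"
  proof (cases "Fstart g (r, s) \<le> int y \<and> int y \<le> path_top n g (r, s) j")
    case True
    have "fst (Fobj n g (r + 1, s)) \<le> L \<and> L \<le> snd (Fobj n g (r + 1, s))
      \<and> fst (Fobj n g (r, s)) \<le> y \<and> y \<le> snd (Fobj n g (r, s))"
      unfolding Fobj_le_iff[OF g(1)] Li using True rs hq by simp
    then show ?thesis unfolding lhs using True rs Li by (auto simp: path_mat_def)
  next
    case False
    then show ?thesis unfolding lhs using rs Li by (auto simp: path_mat_def Fobj_le_iff[OF g(1)])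
  qed
qed

lemma Fpath_eq_path_mat:
  assumes g: "0 < g" "g \<le> n"
  shows "is_path g m X w Y \<Longrightarrow> (Fpath n g X w :: 'k::field mat) = path_mat n g X (num_rho w) (num_pi w)"
proof (induction w arbitrary: X)
  case Nil
  have "path_shift n g X 0 = 0" unfolding path_shift_def lvl_base_def by simp
  moreover have "path_top n g X 0 = Fend n g X" unfolding path_top_def Fend_def by simp
  ultimately show ?case unfolding path_mat_def Fpath.simps id_mat_def
    using Fobj_int[OF g(1), of n X] by (intro ext) auto
next
  case (Cons a w)
  show ?case
  proof (cases a)
    case (Pi r s)
    then have "X = (r + 1, splus g s)" "is_path g m (r, s) w Y" using Cons.prems by auto
    then show ?thesis using Cons.IH Pi by (simp only: Fpath.simps tgt.simps num_pi.simps num_rho.simps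
      path_mat_Pi_step[OF g])
  next
    case (Rho r s)
    then have "X = (r, s)" "is_path g m (r + 1, s) w Y" using Cons.prems by auto
    then show ?thesis using Cons.IH Rho by (simp only: Fpath.simps tgt.simps num_pi.simps num_rho.simps
      path_mat_Rho_step[OF g])
  qed
qed

lemma Fend_Fstart_of_path:
  assumes g: "0 < g" and p: "is_path g m X w Y"
  shows "Fend n g Y = path_top n g X (num_pi w) + path_shift n g X (num_rho w)" "Fstart g Y = (lvl X - int (num_rho w)) mod int g + 1"
proof -
  obtain k where k: "int (snd X) - int (num_pi w) - int (snd Y) = int g * k" using path_endpoint[OF g p] by (auto elim: dvdE)
  have r: "int (fst Y) = int (fst X) + int (num_rho w) - int (num_pi w)" using path_endpoint[OF g p] by simp
  have A: "lvl X - int (num_rho w) = lvl Y + int g * k" unfolding lvl_def using k r by (simp add: algebra_simps)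
  have s: "int (snd X) - int (num_pi w) = int (snd Y) + int g * k" using k by simp
  have h1: "stretch n g (int (snd X) - int (num_pi w)) = stretch n g (int (snd Y)) + (int n + 1) * k"
    unfolding s by (rule stretch_add_mult[OF g])
  have h2: "lvl Y div int g = (lvl X - int (num_rho w)) div int g - k" unfolding A using g by simp
  show "Fend n g Y = path_top n g X (num_pi w) + path_shift n g X (num_rho w)"
    unfolding Fend_def path_top_def path_shift_def lvl_base_def h2 using h1 by (simp add: algebra_simps)
  show "Fstart g Y = (lvl X - int (num_rho w)) mod int g + 1" unfolding Fstart_def A by simp
qed

lemma Fpath_eq_shift_mat:
  assumes g: "0 < g" "g \<le> n" and p: "is_path g m X w Y"
  shows "(Fpath n g X w :: 'k::field mat) = shift_mat (Fobj n g X) (Fobj n g Y) (path_shift n g X (num_rho w))"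
  unfolding Fpath_eq_path_mat[OF g p] path_mat_def shift_mat_def Fobj_int(1)[OF g(1)] Fobj_le_iff[OF g(1)] Fobj_int(2)[OF g(1)]
  unfolding Fend_Fstart_of_path(1)[OF g(1) p] by (intro ext) auto

lemma path_shift_bounds:
  assumes g: "0 < g" "g \<le> n" and p: "is_path g m X w Y"
  shows "(int n + 1) dvd path_shift n g X (num_rho w)" "Fstart g Y - Fstart g X \<le> path_shift n g X (num_rho w)"
    "Fend n g Y - Fend n g X \<le> path_shift n g X (num_rho w)"
proof -
  show "(int n + 1) dvd path_shift n g X (num_rho w)" unfolding path_shift_def lvl_base_def by (simp add: right_diff_distrib[symmetric])
  have gn: "g \<le> n + 1" using g by simp
  have "stretch n g (lvl X - int (num_rho w)) \<le> stretch n g (lvl X)" using stretch_mono[OF g(1) gn] by simp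
  then show "Fstart g Y - Fstart g X \<le> path_shift n g X (num_rho w)"
    unfolding Fend_Fstart_of_path(2)[OF g(1) p] unfolding Fstart_def path_shift_def lvl_base_def stretch_def by linarith
  show "Fend n g Y - Fend n g X \<le> path_shift n g X (num_rho w)"
    unfolding Fend_Fstart_of_path(1)[OF g(1) p] using path_top_le_Fend[OF g(1) gn] by simp
qed

lemma Fpath_HomK:
  assumes g: "0 < g" "g \<le> n" and p: "is_path g m X w Y"
  shows "(Fpath n g X w :: 'k::field mat) \<in> HomK n g (Fobj n g X) (Fobj n g Y)"
proof -
  obtain pV qV pW qW where V: "Fobj n g X = (pV, qV)" and W: "Fobj n g Y = (pW, qW)" by fastforce
  show ?thesis unfolding Fpath_eq_shift_mat[OF g p] V W
    using path_shift_bounds[OF g p] good_interval_Fobj[OF g, of X] good_interval_Fobj[OF g, of Y]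
      Fobj_int[OF g(1), of n X] Fobj_int[OF g(1), of n Y] V W
    by (intro shift_mat_HomK) auto
qed

lemma Fstart_le_path_top_iff:
  assumes g: "0 < g" "g \<le> n"
  shows "(Fstart g X \<le> path_top n g X j) = (j \<le> fst X)"
proof -
  have gn: "g \<le> n + 1" using g by simp
  have "Fstart g X = stretch n g (lvl X) + 1 - lvl_base n g X" unfolding Fstart_def stretch_def lvl_base_def by simp
  then have "(Fstart g X \<le> path_top n g X j) = (stretch n g (lvl X) < stretch n g (int (snd X) - int j))"
    unfolding path_top_def by linarith
  also have "\<dots> = (lvl X < int (snd X) - int j)" by (rule stretch_less_iff[OF g(1) gn])
  also have "\<dots> = (j \<le> fst X)" unfolding lvl_def by linarith
  finally show ?thesis .
qed

lemma Fpath_eq_zero: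
  assumes g: "0 < g" "g \<le> n" and p: "is_path g m X w Y" and w: "fst X < num_pi w"
  shows "(Fpath n g X w :: 'k::field mat) = (\<lambda>i j. 0)"
proof -
  have "\<not> Fstart g X \<le> path_top n g X (num_pi w)" using Fstart_le_path_top_iff[OF g] w by simp
  then show ?thesis unfolding Fpath_eq_path_mat[OF g p] path_mat_def by (intro ext) auto
qed

lemma path_shift_nonneg: "0 < g \<Longrightarrow> 0 \<le> path_shift n g X i"
  unfolding path_shift_def lvl_base_def
  by (simp add: right_diff_distrib[symmetric] zdiv_mono1)

lemma path_shift_inj:
  assumes g: "0 < g" and p1: "is_path g m X w1 Y" and p2: "is_path g m X w2 Y"
    and e: "path_shift n g X (num_rho w1) = path_shift n g X (num_rho w2)"
  shows "num_rho w1 = num_rho w2"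
proof -
  have m: "(lvl X - int (num_rho w1)) mod int g = (lvl X - int (num_rho w2)) mod int g"
    using Fend_Fstart_of_path(2)[OF g p1] Fend_Fstart_of_path(2)[OF g p2] by simp
  have d: "(lvl X - int (num_rho w1)) div int g = (lvl X - int (num_rho w2)) div int g"
    using e unfolding path_shift_def by simp
  have "lvl X - int (num_rho w1) = lvl X - int (num_rho w2)" using m d by (metis div_mult_mod_eq)
  then show ?thesis by simp
qed

text \<open>Undoing stretch turns the inequalities defining a shift degree d = (n + 1) e into
  inequalities between lvl and the second coordinates of X and Y, the latter shifted by g w.\<close>

lemma shift_degree_unstretch:
  assumes g: "0 < g" "g \<le> n" and e: "d = (int n + 1) * e"
    and D: "Fstart g Y - Fstart g X \<le> d" "Fend n g Y - Fend n g X \<le> d" "Fstart g X + d \<le> Fend n g Y"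
  defines "w \<equiv> lvl X div int g - e - lvl Y div int g"
  shows "lvl Y + int g * w \<le> lvl X" "int (snd Y) + int g * w \<le> int (snd X)"
    "lvl X < int (snd Y) + int g * w"
proof -
  have gn: "g \<le> n + 1" using g by simp
  have NT: "(int n + 1) * (lvl X div int g - e) = lvl_base n g X - d"
    using e by (simp add: lvl_base_def algebra_simps)
  have pAX: "stretch n g (lvl X) = lvl X mod int g + lvl_base n g X"
    unfolding stretch_def lvl_base_def by simp
  have "stretch n g (lvl Y + int g * w) = lvl Y mod int g + (int n + 1) * (lvl X div int g - e)"
    unfolding stretch_add_mult[OF g(1)] unfolding stretch_def w_def by (simp add: algebra_simps)
  then have pAY: "stretch n g (lvl Y + int g * w) = lvl Y mod int g + lvl_base n g X - d"
    using NT by simp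
  have "stretch n g (lvl Y + int g * w) \<le> stretch n g (lvl X)"
    using D(1) unfolding pAY pAX Fstart_def by simp
  then show "lvl Y + int g * w \<le> lvl X" unfolding stretch_le_iff[OF g(1) gn] .
  have "stretch n g (int (snd Y) + int g * w)
      = stretch n g (int (snd Y)) + (int n + 1) * (lvl X div int g - e) - (int n + 1) * (lvl Y div int g)"
    unfolding stretch_add_mult[OF g(1)] w_def by (simp add: algebra_simps)
  then have psY: "stretch n g (int (snd Y) + int g * w) = Fend n g Y + lvl_base n g X - d"
    using NT unfolding Fend_def lvl_base_def by simp
  have "stretch n g (int (snd Y) + int g * w) \<le> stretch n g (int (snd X))"
    using D(2) unfolding psY Fend_def by simp
  then show "int (snd Y) + int g * w \<le> int (snd X)" unfolding stretch_le_iff[OF g(1) gn] .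
  have "stretch n g (lvl X) < stretch n g (int (snd Y) + int g * w)"
    using D(3) unfolding psY Fstart_def pAX by simp
  then show "lvl X < int (snd Y) + int g * w" unfolding stretch_less_iff[OF g(1) gn] .
qed

lemma shift_degree_realised:
  assumes g: "0 < g" "g \<le> n" and dD: "d \<in> shift_degrees n (Fobj n g X) (Fobj n g Y)"
  shows "\<exists>i j. j \<le> fst X \<and> int (fst Y) = int (fst X) + int i - int j
      \<and> int g dvd (int (snd X) - int j - int (snd Y)) \<and> path_shift n g X i = d"
proof -
  have D: "(int n + 1) dvd d" "Fstart g Y - Fstart g X \<le> d" "Fend n g Y - Fend n g X \<le> d" "Fstart g X + d \<le> Fend n g Y"
    using dD unfolding shift_degrees_def Fobj_int(1)[OF g(1)] Fobj_int(2)[OF g(1)] by auto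
  obtain e where e: "d = (int n + 1) * e" using D(1) by (auto elim: dvdE)
  define w where "w = lvl X div int g - e - lvl Y div int g"
  note bounds = shift_degree_unstretch[OF g e D(2-4), folded w_def]
  define i where "i = nat (lvl X - (lvl Y + int g * w))"
  define j where "j = nat (int (snd X) - (int (snd Y) + int g * w))"
  have ii: "int i = lvl X - (lvl Y + int g * w)" and jj: "int j = int (snd X) - (int (snd Y) + int g * w)"
    unfolding i_def j_def using bounds(1,2) by simp_all
  have "j \<le> fst X" using jj bounds(3) unfolding lvl_def by simp
  moreover have "int (fst Y) = int (fst X) + int i - int j"
    unfolding ii jj using lvl_def[of X] lvl_def[of Y] by simp
  moreover have "int g dvd (int (snd X) - int j - int (snd Y))"
    unfolding jj by simp
  moreover have "path_shift n g X i = d"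
  proof -
    have "(lvl X - int i) div int g = lvl Y div int g + w" unfolding ii using g by simp
    then have q: "(lvl X - int i) div int g = lvl X div int g - e" unfolding w_def by simp
    show ?thesis unfolding path_shift_def lvl_base_def e q by (simp add: algebra_simps)
  qed
  ultimately show ?thesis by blast
qed

section \<open>Normal paths\<close>

definition sminus :: "nat \<Rightarrow> nat \<Rightarrow> nat" where "sminus g s = (if s = 1 then g else s - 1)"

lemma splus_sminus: "1 \<le> s \<Longrightarrow> s \<le> g \<Longrightarrow> splus g (sminus g s) = s"
  unfolding splus_def sminus_def by (cases "s = 1") auto

lemma sminus_splus: "1 \<le> s \<Longrightarrow> s \<le> g \<Longrightarrow> sminus g (splus g s) = s"
  unfolding splus_def sminus_def by (cases "s = g") auto

lemma sminus_range: "1 \<le> s \<Longrightarrow> s \<le> g \<Longrightarrow> 1 \<le> sminus g s \<and> sminus g s \<le> g"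
  unfolding sminus_def by auto

fun pi_chain :: "nat \<Rightarrow> nat \<Rightarrow> nat \<times> nat \<Rightarrow> arr list" where
  "pi_chain g 0 X = []"
| "pi_chain g (Suc k) X = Pi (fst X - 1) (sminus g (snd X)) # pi_chain g k (fst X - 1, sminus g (snd X))"

fun pi_chain_end :: "nat \<Rightarrow> nat \<Rightarrow> nat \<times> nat \<Rightarrow> nat \<times> nat" where
  "pi_chain_end g 0 X = X"
| "pi_chain_end g (Suc k) X = pi_chain_end g k (fst X - 1, sminus g (snd X))"

fun rho_chain :: "nat \<Rightarrow> nat \<times> nat \<Rightarrow> arr list" where
  "rho_chain 0 X = []"
| "rho_chain (Suc k) X = Rho (fst X) (snd X) # rho_chain k (fst X + 1, snd X)"

definition normal_path :: "nat \<Rightarrow> nat \<times> nat \<Rightarrow> nat \<Rightarrow> nat \<Rightarrow> arr list" where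
  "normal_path g X j i = pi_chain g j X @ rho_chain i (pi_chain_end g j X)"

lemma pi_chain_end_fst: "fst (pi_chain_end g k X) = fst X - k"
  by (induction k arbitrary: X) auto

lemma pi_chain_end_snd: "snd (pi_chain_end g k (a, b)) = snd (pi_chain_end g k (a', b))"
  by (induction k arbitrary: a a' b) auto

lemma pi_chain_end_snd_range:
  "1 \<le> snd X \<Longrightarrow> snd X \<le> g \<Longrightarrow> 1 \<le> snd (pi_chain_end g k X) \<and> snd (pi_chain_end g k X) \<le> g"
  by (induction k arbitrary: X) (auto simp: sminus_def)

lemma pi_chain_end_snd_cong:
  "1 \<le> snd X \<Longrightarrow> snd X \<le> g \<Longrightarrow> int g dvd (int (snd X) - int k - int (snd (pi_chain_end g k X)))"
proof (induction k arbitrary: X)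
  case 0 then show ?case by simp
next
  case (Suc k)
  define X' where "X' = (fst X - 1, sminus g (snd X))"
  have r: "1 \<le> snd X'" "snd X' \<le> g" using sminus_range[OF Suc.prems] unfolding X'_def by auto
  have IH: "int g dvd (int (snd X') - int k - int (snd (pi_chain_end g k X')))" by (rule Suc.IH[OF r])
  have "int (snd X) - int (Suc k) - int (snd (pi_chain_end g (Suc k) X)) =
        (int (snd X) - 1 - int (snd X')) + (int (snd X') - int k - int (snd (pi_chain_end g k X')))"
    unfolding X'_def by simp
  moreover have "int g dvd (int (snd X) - 1 - int (snd X'))"
    unfolding X'_def sminus_def using Suc.prems by (cases "snd X = 1") auto
  ultimately show ?case using IH by (metis dvd_add)
qed

lemma vertex_pred: "is_vertex g m (r, s) \<Longrightarrow> 1 \<le> r \<Longrightarrow> is_vertex g m (r - 1, sminus g s)"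
  unfolding is_vertex_def sminus_def by auto

lemma pi_chain_is_path: "is_vertex g m X \<Longrightarrow> k \<le> fst X \<Longrightarrow> is_path g m X (pi_chain g k X) (pi_chain_end g k X)"
proof (induction k arbitrary: X)
  case 0 then show ?case by simp
next
  case (Suc k)
  obtain r s where X: "X = (r, s)" by fastforce
  have r1: "1 \<le> r" using Suc.prems X by simp
  have s: "1 \<le> s" "s \<le> g" using Suc.prems(1) X unfolding is_vertex_def by auto
  have v: "is_vertex g m (r - 1, sminus g s)" using vertex_pred Suc.prems(1) r1 X by simp
  have IH: "is_path g m (r - 1, sminus g s) (pi_chain g k (r - 1, sminus g s)) (pi_chain_end g k (r - 1, sminus g s))"
    using Suc.IH[OF v] Suc.prems X by simp
  have a: "is_arrow g m (Pi (r - 1) (sminus g s))" unfolding is_arrow_def using v Suc.prems(1) X r1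
    by (simp add: splus_sminus[OF s])
  show ?case unfolding X using IH a r1 by (simp add: splus_sminus[OF s])
qed

lemma rho_chain_is_path: "is_vertex g m (fst Z + i, snd Z) \<Longrightarrow> is_path g m Z (rho_chain i Z) (fst Z + i, snd Z)"
proof (induction i arbitrary: Z)
  case 0 then show ?case by simp
next
  case (Suc i)
  have v1: "is_vertex g m (fst Z + 1 + i, snd Z)" using Suc.prems by (simp add: add.commute add.left_commute)
  have IH: "is_path g m (fst Z + 1, snd Z) (rho_chain i (fst Z + 1, snd Z)) (fst Z + 1 + i, snd Z)"
    using Suc.IH[of "(fst Z + 1, snd Z)"] v1 by simp
  have "is_arrow g m (Rho (fst Z) (snd Z))" using Suc.prems unfolding is_arrow_def is_vertex_def by auto
  then show ?case using IH by (simp add: add.commute add.left_commute)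
qed

lemma num_rho_pi_chain: "num_rho (pi_chain g k X) = 0" by (induction k arbitrary: X) auto

lemma num_rho_rho_chain: "num_rho (rho_chain k X) = k" by (induction k arbitrary: X) auto

lemma num_rho_normal_path: "num_rho (normal_path g X j i) = i"
  unfolding normal_path_def by (simp add: num_rho_append num_rho_pi_chain num_rho_rho_chain)

lemma normal_path_is_path:
  assumes X: "is_vertex g m X" and Y: "is_vertex g m Y" and j: "j \<le> fst X"
    and r: "int (fst Y) = int (fst X) + int i - int j"
    and s: "int g dvd (int (snd X) - int j - int (snd Y))"
  shows "is_path g m X (normal_path g X j i) Y"
proof -
  have sX: "1 \<le> snd X" "snd X \<le> g" and sY: "1 \<le> snd Y" "snd Y \<le> g" using X Y unfolding is_vertex_def by auto
  have p1: "is_path g m X (pi_chain g j X) (pi_chain_end g j X)" by (rule pi_chain_is_path[OF X j])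
  have e1: "fst (pi_chain_end g j X) + i = fst Y" using r j pi_chain_end_fst[of g j X] by simp
  have d: "int g dvd (int (snd (pi_chain_end g j X)) - int (snd Y))"
    using dvd_diff[OF s pi_chain_end_snd_cong[OF sX, of j]] by (simp add: algebra_simps)
  have e2: "snd (pi_chain_end g j X) = snd Y" using dvd_range_eq[OF _ _ sY d] pi_chain_end_snd_range[OF sX, of j] by auto
  have "(fst (pi_chain_end g j X) + i, snd (pi_chain_end g j X)) = Y" using e1 e2 by (simp add: prod_eq_iff)
  then have p2: "is_path g m (pi_chain_end g j X) (rho_chain i (pi_chain_end g j X)) Y"
    using rho_chain_is_path[of g m "pi_chain_end g j X" i] Y by simp
  show ?thesis unfolding normal_path_def is_path_append using p1 p2 by blast
qed

lemma normal_path_Pi: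
  "1 \<le> s \<Longrightarrow> s \<le> g \<Longrightarrow> normal_path g (r + 1, splus g s) (Suc j) i = Pi r s # normal_path g (r, s) j i"
  unfolding normal_path_def by (simp add: sminus_splus)

lemma normal_path_Suc_num_rho:
  assumes "j \<le> r"
  shows "normal_path g (r, s) j (Suc i)
    = pi_chain g j (r, s) @ Rho (r - j) (snd (pi_chain_end g j (r, s))) # rho_chain i (pi_chain_end g j (r + 1, s))"
proof -
  have "pi_chain_end g j (r + 1, s) = (fst (pi_chain_end g j (r, s)) + 1, snd (pi_chain_end g j (r, s)))"
    using pi_chain_end_fst[of g j "(r + 1, s)"] pi_chain_end_fst[of g j "(r, s)"]
      pi_chain_end_snd[of g j "r + 1" s r] assms by (simp add: prod_eq_iff)
  then show ?thesis unfolding normal_path_def using pi_chain_end_fst[of g j "(r, s)"] by simp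
qed

section \<open>Reduction modulo the ideal of relations\<close>

lemma ideal_zero: "(\<lambda>w. 0) \<in> (ideal g m X Y :: (arr list \<Rightarrow> 'k::field) set)"
  unfolding ideal_def mem_Collect_eq by (rule exI[of _ 0]) auto

lemma ideal_add:
  assumes "h1 \<in> (ideal g m X Y :: (arr list \<Rightarrow> 'k::field) set)" "h2 \<in> ideal g m X Y"
  shows "(\<lambda>w. h1 w + h2 w) \<in> ideal g m X Y"
proof -
  obtain N1 a1 G1 where 1: "\<forall>i<(N1::nat). G1 i \<in> ideal_gens g m X Y" "h1 = (\<lambda>w. \<Sum>i<N1. a1 i * G1 i w)"
    using assms(1) unfolding ideal_def mem_Collect_eq by (elim exE conjE) auto
  obtain N2 a2 G2 where 2: "\<forall>i<(N2::nat). G2 i \<in> ideal_gens g m X Y" "h2 = (\<lambda>w. \<Sum>i<N2. a2 i * G2 i w)"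
    using assms(2) unfolding ideal_def mem_Collect_eq by (elim exE conjE) auto
  define a where "a i = (if i < N1 then a1 i else a2 (i - N1))" for i
  define G where "G i = (if i < N1 then G1 i else G2 (i - N1))" for i
  have "\<forall>i<N1 + N2. G i \<in> ideal_gens g m X Y" using 1 2 unfolding G_def by auto
  moreover have "(\<lambda>w. h1 w + h2 w) = (\<lambda>w. \<Sum>i<N1 + N2. a i * G i w)"
  proof
    fix w
    have "(\<Sum>i<N1 + N2. a i * G i w) = (\<Sum>i<N1. a i * G i w) + (\<Sum>i\<in>{N1..<N1 + N2}. a i * G i w)"
      by (simp add: lessThan_atLeast0 sum.atLeastLessThan_concat)
    also have "(\<Sum>i<N1. a i * G i w) = (\<Sum>i<N1. a1 i * G1 i w)" unfolding a_def G_def by simp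
    also have "(\<Sum>i\<in>{N1..<N1 + N2}. a i * G i w) = (\<Sum>i<N2. a2 i * G2 i w)"
    proof -
      have "(\<Sum>i\<in>{N1..<N1 + N2}. a i * G i w) = (\<Sum>i\<in>{0..<N2}. a (i + N1) * G (i + N1) w)"
        by (subst sum.shift_bounds_nat_ivl[symmetric]) (simp add: add.commute)
      also have "\<dots> = (\<Sum>i<N2. a2 i * G2 i w)" unfolding a_def G_def by (simp add: lessThan_atLeast0)
      finally show ?thesis .
    qed
    finally show "h1 w + h2 w = (\<Sum>i<N1 + N2. a i * G i w)" using 1 2 by simp
  qed
  ultimately show ?thesis unfolding ideal_def mem_Collect_eq
    by (intro exI[of _ "N1 + N2"] exI[of _ a] exI[of _ G]) auto
qed

lemma ideal_smult:
  assumes "h \<in> (ideal g m X Y :: (arr list \<Rightarrow> 'k::field) set)"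
  shows "(\<lambda>w. c * h w) \<in> ideal g m X Y"
proof -
  obtain N a G where 1: "\<forall>i<(N::nat). G i \<in> ideal_gens g m X Y" "h = (\<lambda>w. \<Sum>i<N. a i * G i w)"
    using assms unfolding ideal_def mem_Collect_eq by (elim exE conjE) auto
  have "(\<lambda>w. c * h w) = (\<lambda>w. \<Sum>i<N. (c * a i) * G i w)" unfolding 1 by (simp add: sum_distrib_left mult.assoc)
  then show ?thesis unfolding ideal_def mem_Collect_eq using 1
    by (intro exI[of _ N] exI[of _ "\<lambda>i. c * a i"] exI[of _ G]) auto
qed

lemma ideal_sum:
  assumes "finite S" "\<forall>x\<in>S. h x \<in> (ideal g m X Y :: (arr list \<Rightarrow> 'k::field) set)"
  shows "(\<lambda>w. \<Sum>x\<in>S. c x * h x w) \<in> ideal g m X Y"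
  using assms
proof (induction S rule: finite_induct)
  case empty then show ?case using ideal_zero by simp
next
  case (insert x F)
  have "(\<lambda>w. c x * h x w + (\<Sum>x\<in>F. c x * h x w)) \<in> ideal g m X Y"
    using insert by (intro ideal_add ideal_smult) auto
  then show ?case using insert by simp
qed

lemma ideal_gens_in_ideal: "G \<in> ideal_gens g m X Y \<Longrightarrow> G \<in> (ideal g m X Y :: (arr list \<Rightarrow> 'k::field) set)"
  unfolding ideal_def mem_Collect_eq by (rule exI[of _ 1], rule exI[of _ "\<lambda>_. 1"], rule exI[of _ "\<lambda>_. G"]) auto

lemma sandwich_path_vec: "sandwich u (path_vec p) v = (path_vec (u @ p @ v) :: arr list \<Rightarrow> 'k::field)"
  unfolding sandwich_def path_vec_def by (rule ext) auto

lemma sandwich_path_vec_diff: "sandwich u (\<lambda>w. path_vec p1 w - path_vec p2 w) v =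
   (\<lambda>w. path_vec (u @ p1 @ v) w - path_vec (u @ p2 @ v) w :: 'k::field)"
  unfolding sandwich_def path_vec_def by (rule ext) auto

lemma sandwich_in_ideal:
  assumes "(A, \<rho>, B) \<in> Rels g m" "is_path g m X u A" "is_path g m B v Y"
  shows "sandwich u \<rho> v \<in> (ideal g m X Y :: (arr list \<Rightarrow> 'k::field) set)"
  by (rule ideal_gens_in_ideal) (use assms in \<open>unfold ideal_gens_def, blast\<close>)

definition precomp :: "arr \<Rightarrow> (arr list \<Rightarrow> 'k::field) \<Rightarrow> arr list \<Rightarrow> 'k" where
  "precomp a h = (\<lambda>w. case w of [] \<Rightarrow> 0 | b # w' \<Rightarrow> if b = a then h w' else 0)"

lemma precomp_path_vec: "precomp a (path_vec w) = path_vec (a # w)"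
  unfolding precomp_def path_vec_def by (rule ext) (auto split: list.splits)

lemma precomp_sandwich: "precomp a (sandwich u \<rho> v) = sandwich (a # u) \<rho> v"
proof
  fix w
  show "precomp a (sandwich u \<rho> v) w = sandwich (a # u) \<rho> v w"
  proof (cases w)
    case Nil then show ?thesis unfolding precomp_def sandwich_def by simp
  next
    case (Cons b w')
    show ?thesis
    proof (cases "b = a")
      case True
      have "(\<exists>x. w' = u @ x @ v) = (\<exists>x. w = (a # u) @ x @ v)" using Cons True by simp
      moreover have "(THE x. w' = u @ x @ v) = (THE x. w = (a # u) @ x @ v)" using Cons True by simp
      ultimately show ?thesis unfolding precomp_def sandwich_def using Cons True by simp
    next
      case False
      then show ?thesis unfolding precomp_def sandwich_def using Cons by auto
    qed
  qed
qed

lemma precomp_zero: "precomp a (\<lambda>_. 0) = (\<lambda>_. 0)"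
  unfolding precomp_def by (rule ext) (simp split: list.split)

lemma precomp_lincomb: "precomp a (\<lambda>w. \<Sum>i<N. c i * G i w) = (\<lambda>w. \<Sum>i<N. c i * precomp a (G i) w)"
  unfolding precomp_def by (rule ext) (auto split: list.splits)

lemma precomp_diff: "precomp a (\<lambda>w. h1 w - h2 w) = (\<lambda>w. precomp a h1 w - precomp a h2 w)"
  unfolding precomp_def by (rule ext) (auto split: list.splits)

lemma precomp_ideal:
  assumes a: "is_arrow g m a" and h: "h \<in> (ideal g m (tgt g a) Y :: (arr list \<Rightarrow> 'k::field) set)"
  shows "precomp a h \<in> ideal g m (src g a) Y"
proof -
  obtain N c G where 1: "\<forall>i<(N::nat). G i \<in> ideal_gens g m (tgt g a) Y" "h = (\<lambda>w. \<Sum>i<N. c i * G i w)"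
    using h unfolding ideal_def mem_Collect_eq by (elim exE conjE) auto
  have "\<forall>i<N. precomp a (G i) \<in> ideal_gens g m (src g a) Y"
  proof (intro allI impI)
    fix i assume "i < N"
    then obtain u \<rho> v A B where G: "G i = sandwich u \<rho> v" "(A, \<rho>, B) \<in> Rels g m" "is_path g m (tgt g a) u A"
      "is_path g m B v Y" using 1 unfolding ideal_gens_def mem_Collect_eq by blast
    have "is_path g m (src g a) (a # u) A" using G a by simp
    then show "precomp a (G i) \<in> ideal_gens g m (src g a) Y" unfolding ideal_gens_def mem_Collect_eq G(1) precomp_sandwich
      using G by blast
  qed
  then show ?thesis unfolding ideal_def mem_Collect_eq 1(2) precomp_lincomb
    by (intro exI[of _ N] exI[of _ c] exI[of _ "\<lambda>i. precomp a (G i)"]) auto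
qed

definition ideal_cong ::
    "nat \<Rightarrow> nat \<Rightarrow> nat \<times> nat \<Rightarrow> nat \<times> nat \<Rightarrow> (arr list \<Rightarrow> 'k::field) \<Rightarrow> (arr list \<Rightarrow> 'k) \<Rightarrow> bool" where
  "ideal_cong g m X Y h h' \<longleftrightarrow> (\<lambda>w. h w - h' w) \<in> ideal g m X Y"

lemma ideal_cong_refl: "ideal_cong g m X Y h h"
  unfolding ideal_cong_def using ideal_zero by simp

lemma ideal_cong_trans:
  assumes "ideal_cong g m X Y h1 h2" "ideal_cong g m X Y h2 h3"
  shows "ideal_cong g m X Y h1 h3"
  using ideal_add[OF assms[unfolded ideal_cong_def]] unfolding ideal_cong_def by simp

lemma ideal_cong_zero_iff: "ideal_cong g m X Y h (\<lambda>_. 0) \<longleftrightarrow> h \<in> ideal g m X Y"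
  unfolding ideal_cong_def by simp

lemma ideal_cong_precomp:
  assumes "is_arrow g m a" "ideal_cong g m (tgt g a) Y h h'"
  shows "ideal_cong g m (src g a) Y (precomp a h) (precomp a h')"
  using precomp_ideal[OF assms(1)] assms(2) unfolding ideal_cong_def precomp_diff[symmetric] by blast

lemma commutativity_relation:
  assumes p: "is_path g m (r + 1, splus g s) (Rho (r + 1) (splus g s) # Pi (r + 1) s # T) Y"
    and s: "1 \<le> s" "s \<le> g"
  shows "ideal_cong g m (r + 1, splus g s) Y (path_vec (Rho (r + 1) (splus g s) # Pi (r + 1) s # T))
           (path_vec (Pi r s # Rho r s # T) :: arr list \<Rightarrow> 'k::field)"
proof -
  have aR: "is_arrow g m (Rho (r + 1) (splus g s))" and aP: "is_arrow g m (Pi (r + 1) s)"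
    and pT: "is_path g m (r + 1, s) T Y" using p by auto
  have "is_vertex g m (r, s)" using aP unfolding is_arrow_def is_vertex_def by auto
  then have "is_arrow g m (Pi r s)" "is_arrow g m (Rho r s)" using aR aP unfolding is_arrow_def by auto
  then have "((r + 1, splus g s), (\<lambda>w. path_vec [Rho (r + 1) (splus g s), Pi (r + 1) s] w
      - path_vec [Pi r s, Rho r s] w :: 'k), (r + 1, s)) \<in> Rels g m"
    using aR aP s unfolding Rels_def by blast
  moreover have "is_path g m (r + 1, splus g s) [] (r + 1, splus g s)"
    using aR unfolding is_arrow_def by simp
  ultimately have "sandwich [] (\<lambda>w. path_vec [Rho (r + 1) (splus g s), Pi (r + 1) s] w
      - path_vec [Pi r s, Rho r s] w :: 'k) T \<in> ideal g m (r + 1, splus g s) Y"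
    using pT by (rule sandwich_in_ideal)
  then show ?thesis unfolding ideal_cong_def sandwich_path_vec_diff by simp
qed

lemma zero_relation:
  assumes p: "is_path g m (0, splus g s) (Rho 0 (splus g s) # Pi 0 s # T) Y"
    and s: "1 \<le> s" "s \<le> g"
  shows "(path_vec (Rho 0 (splus g s) # Pi 0 s # T) :: arr list \<Rightarrow> 'k::field) \<in> ideal g m (0, splus g s) Y"
proof -
  have "((0, splus g s), path_vec [Rho 0 (splus g s), Pi 0 s] :: arr list \<Rightarrow> 'k, (0, s)) \<in> Rels g m"
    using s unfolding Rels_def by blast
  moreover have "is_path g m (0, splus g s) [] (0, splus g s)" and "is_path g m (0, s) T Y"
    using p by (auto simp: is_arrow_def)
  ultimately have "sandwich [] (path_vec [Rho 0 (splus g s), Pi 0 s] :: arr list \<Rightarrow> 'k) T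
      \<in> ideal g m (0, splus g s) Y" by (rule sandwich_in_ideal)
  then show ?thesis unfolding sandwich_path_vec by simp
qed

lemma rho_pi_chain_commute:
  "is_path g m (r, s) (Rho r s # pi_chain g k (r + 1, s) @ rest) Y \<Longrightarrow> k \<le> r \<Longrightarrow>
   ideal_cong g m (r, s) Y (path_vec (Rho r s # pi_chain g k (r + 1, s) @ rest))
     (path_vec (pi_chain g k (r, s) @ Rho (r - k) (snd (pi_chain_end g k (r, s))) # rest) :: arr list \<Rightarrow> 'k::field)"
proof (induction k arbitrary: r s)
  case 0
  then show ?case by (simp add: ideal_cong_refl)
next
  case (Suc k)
  obtain r' where r: "r = r' + 1" using Suc.prems(2) by (metis Suc_eq_plus1 Suc_le_D)
  define s' where "s' = sminus g s"
  have sr: "1 \<le> s" "s \<le> g" using Suc.prems(1) by (auto simp: is_arrow_def is_vertex_def)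
  have ss': "splus g s' = s" unfolding s'_def by (rule splus_sminus[OF sr])
  define T where "T = pi_chain g k (r' + 1, s') @ rest"
  have p: "is_path g m (r' + 1, splus g s') (Rho (r' + 1) (splus g s') # Pi (r' + 1) s' # T) Y"
    using Suc.prems(1) unfolding r T_def s'_def by (simp add: ss'[unfolded s'_def])
  have G: "ideal_cong g m (r, s) Y (path_vec (Rho r s # Pi r s' # T))
      (path_vec (Pi r' s' # Rho r' s' # T) :: arr list \<Rightarrow> 'k)"
    using commutativity_relation[OF p] sminus_range[OF sr] unfolding s'_def r ss'[unfolded s'_def] by simp
  have aP: "is_arrow g m (Pi r' s')" and "is_vertex g m (r', s')" and pT: "is_path g m (r, s') T Y"
    using p r by (auto simp: is_arrow_def is_vertex_def)
  then have "is_arrow g m (Rho r' s')" using is_path_vertex[OF pT] r unfolding is_arrow_def by simp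
  then have "is_path g m (r', s') (Rho r' s' # pi_chain g k (r' + 1, s') @ rest) Y"
    using pT unfolding T_def r by simp
  then have "ideal_cong g m (r', s') Y (path_vec (Rho r' s' # T))
      (path_vec (pi_chain g k (r', s') @ Rho (r' - k) (snd (pi_chain_end g k (r', s'))) # rest) :: arr list \<Rightarrow> 'k)"
    using Suc.IH Suc.prems(2) r unfolding T_def by simp
  from ideal_cong_precomp[OF aP, simplified, OF this]
  have "ideal_cong g m (r, s) Y (path_vec (Pi r' s' # Rho r' s' # T))
      (path_vec (Pi r' s' # pi_chain g k (r', s') @ Rho (r' - k) (snd (pi_chain_end g k (r', s'))) # rest) :: arr list \<Rightarrow> 'k)"
    unfolding precomp_path_vec r ss' by simp
  with G show ?case
    unfolding r s'_def T_def by (simp add: ideal_cong_trans)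
qed

lemma rho_pi_chain_vanish:
  "is_path g m (r, s) (Rho r s # pi_chain g (r + 1) (r + 1, s) @ rest) Y \<Longrightarrow>
   (path_vec (Rho r s # pi_chain g (r + 1) (r + 1, s) @ rest) :: arr list \<Rightarrow> 'k::field) \<in> ideal g m (r, s) Y"
proof (induction r arbitrary: s)
  case 0
  have sr: "1 \<le> s" "s \<le> g" using "0.prems" by (auto simp: is_arrow_def is_vertex_def)
  have ss': "splus g (sminus g s) = s" by (rule splus_sminus[OF sr])
  have "is_path g m (0, splus g (sminus g s)) (Rho 0 (splus g (sminus g s)) # Pi 0 (sminus g s) # rest) Y"
    using "0.prems" unfolding ss' by simp
  from zero_relation[OF this] sminus_range[OF sr] show ?case unfolding ss' by simp
next
  case (Suc r')
  define s' where "s' = sminus g s"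
  have sr: "1 \<le> s" "s \<le> g" using Suc.prems by (auto simp: is_arrow_def is_vertex_def)
  have ss': "splus g s' = s" unfolding s'_def by (rule splus_sminus[OF sr])
  define T where "T = pi_chain g (r' + 1) (r' + 1, s') @ rest"
  have p: "is_path g m (r' + 1, splus g s') (Rho (r' + 1) (splus g s') # Pi (r' + 1) s' # T) Y"
    using Suc.prems unfolding T_def s'_def by (simp add: ss'[unfolded s'_def])
  have G: "ideal_cong g m (Suc r', s) Y (path_vec (Rho (Suc r') s # Pi (Suc r') s' # T))
      (path_vec (Pi r' s' # Rho r' s' # T) :: arr list \<Rightarrow> 'k)"
    using commutativity_relation[OF p] sminus_range[OF sr] unfolding s'_def ss'[unfolded s'_def] by simp
  have aP: "is_arrow g m (Pi r' s')" using p by (auto simp: is_arrow_def is_vertex_def)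
  then have "is_path g m (r', s') (Rho r' s' # T) Y" using p by (auto simp: is_arrow_def)
  then have "(path_vec (Rho r' s' # T) :: arr list \<Rightarrow> 'k) \<in> ideal g m (r', s') Y"
    using Suc.IH unfolding T_def by simp
  from precomp_ideal[OF aP, simplified, OF this]
  have "ideal_cong g m (Suc r', s) Y (path_vec (Pi r' s' # Rho r' s' # T)) (\<lambda>_. 0 :: 'k)"
    unfolding ideal_cong_zero_iff precomp_path_vec using ss' by simp
  with G show ?case
    unfolding ideal_cong_zero_iff[symmetric] T_def s'_def by (simp add: ideal_cong_trans)
qed

definition normal_form :: "nat \<Rightarrow> nat \<times> nat \<Rightarrow> arr list \<Rightarrow> arr list \<Rightarrow> 'k::field" where
  "normal_form g X w = (if num_pi w \<le> fst X then path_vec (normal_path g X (num_pi w) (num_rho w)) else (\<lambda>_. 0))"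

lemma precomp_Pi_normal_form:
  "1 \<le> s \<Longrightarrow> s \<le> g \<Longrightarrow>
   precomp (Pi r s) (normal_form g (r, s) w) = (normal_form g (r + 1, splus g s) (Pi r s # w) :: arr list \<Rightarrow> 'k::field)"
  using normal_path_Pi[of s g r "num_pi w" "num_rho w"]
  by (simp add: normal_form_def precomp_path_vec precomp_zero)

lemma precomp_Rho_normal_form:
  assumes g: "0 < g" and p: "is_path g m (r, s) (Rho r s # w) Y"
  shows "ideal_cong g m (r, s) Y (precomp (Rho r s) (normal_form g (r + 1, s) w))
           (normal_form g (r, s) (Rho r s # w) :: arr list \<Rightarrow> 'k::field)"
proof (cases "num_pi w \<le> r + 1")
  case True
  define j where "j = num_pi w"
  define i where "i = num_rho w"
  define rest where "rest = rho_chain i (pi_chain_end g j (r + 1, s))"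
  have pw: "is_path g m (r + 1, s) w Y" and aR: "is_arrow g m (Rho r s)" using p by auto
  have "is_path g m (r + 1, s) (normal_path g (r + 1, s) j i) Y"
    using normal_path_is_path[of g m] is_path_vertex[OF pw] True path_endpoint[OF g pw]
    unfolding j_def i_def by simp
  then have pn: "is_path g m (r, s) (Rho r s # pi_chain g j (r + 1, s) @ rest) Y"
    using aR unfolding normal_path_def rest_def by simp
  have lhs: "precomp (Rho r s) (normal_form g (r + 1, s) w)
      = (path_vec (Rho r s # pi_chain g j (r + 1, s) @ rest) :: arr list \<Rightarrow> 'k)"
    using True unfolding normal_form_def j_def i_def rest_def normal_path_def by (simp add: precomp_path_vec)
  show ?thesis
  proof (cases "j \<le> r")
    case True
    then have "normal_form g (r, s) (Rho r s # w) = (path_vec (pi_chain g j (r, s)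
        @ Rho (r - j) (snd (pi_chain_end g j (r, s))) # rest) :: arr list \<Rightarrow> 'k)"
      unfolding normal_form_def rest_def by (simp add: normal_path_Suc_num_rho j_def i_def)
    then show ?thesis using rho_pi_chain_commute[OF pn True] unfolding lhs by simp
  next
    case False
    then have "j = r + 1" using \<open>num_pi w \<le> r + 1\<close> unfolding j_def by simp
    then have "normal_form g (r, s) (Rho r s # w) = (\<lambda>_. 0 :: 'k)"
      unfolding normal_form_def j_def by simp
    then show ?thesis using rho_pi_chain_vanish[of g m r s rest Y] pn \<open>j = r + 1\<close>
      unfolding lhs by (simp add: ideal_cong_zero_iff)
  qed
next
  case False
  then show ?thesis by (simp add: normal_form_def precomp_zero ideal_cong_refl)
qed

lemma path_reduction:
  assumes g: "0 < g"
  shows "is_path g m X w Y \<Longrightarrow> ideal_cong g m X Y (path_vec w) (normal_form g X w :: arr list \<Rightarrow> 'k::field)"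
proof (induction w arbitrary: X)
  case Nil
  then show ?case by (simp add: normal_form_def normal_path_def ideal_cong_refl)
next
  case (Cons a w)
  show ?case
  proof (cases a)
    case (Pi r s)
    have X: "X = (r + 1, splus g s)" and aa: "is_arrow g m (Pi r s)" and pw: "is_path g m (r, s) w Y"
      using Cons.prems Pi by auto
    have sr: "1 \<le> s" "s \<le> g" using is_path_vertex[OF pw] unfolding is_vertex_def by auto
    have "ideal_cong g m X Y (precomp (Pi r s) (path_vec w)) (precomp (Pi r s) (normal_form g (r, s) w) :: arr list \<Rightarrow> 'k)"
      using ideal_cong_precomp[OF aa] Cons.IH[OF pw] X by simp
    then show ?thesis unfolding Pi X precomp_path_vec precomp_Pi_normal_form[OF sr] .
  next
    case (Rho r s)
    have X: "X = (r, s)" and aa: "is_arrow g m (Rho r s)" and pw: "is_path g m (r + 1, s) w Y"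
      using Cons.prems Rho by auto
    have "ideal_cong g m X Y (precomp (Rho r s) (path_vec w)) (precomp (Rho r s) (normal_form g (r + 1, s) w) :: arr list \<Rightarrow> 'k)"
      using ideal_cong_precomp[OF aa] Cons.IH[OF pw] X by simp
    then show ?thesis using precomp_Rho_normal_form[OF g Cons.prems[unfolded Rho X]]
      unfolding Rho X precomp_path_vec by (rule ideal_cong_trans)
  qed
qed

section \<open>The functor on morphisms\<close>

lemma kQ_D:
  assumes "c \<in> kQ g m X Y"
  shows "finite {w. c w \<noteq> 0}" "\<And>w. c w \<noteq> 0 \<Longrightarrow> is_path g m X w Y"
  using assms unfolding kQ_def by auto

lemma path_vec_expansion:
  assumes "finite S" "{w. c w \<noteq> 0} \<subseteq> S"
  shows "c v = (\<Sum>w\<in>S. c w * path_vec w v)"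
proof -
  have "(\<Sum>w\<in>S. c w * path_vec w v) = (\<Sum>w\<in>S. if v = w then c v else 0)"
    by (intro sum.cong) (auto simp: path_vec_def)
  also have "\<dots> = c v" using assms by (auto simp: sum.delta)
  finally show ?thesis by simp
qed

lemma Fmor_eq_sum:
  assumes "finite S" "{w. c w \<noteq> 0} \<subseteq> S"
  shows "Fmor n g X c = (\<lambda>i j. \<Sum>w\<in>S. c w * Fpath n g X w i j)"
  unfolding Fmor_def by (intro ext sum.mono_neutral_left) (use assms in auto)

lemma Fmor_path_vec: "Fmor n g X (path_vec w) = Fpath n g X w"
proof -
  have "{v. path_vec w v \<noteq> (0 :: 'a::field)} \<subseteq> {w}" by (auto simp: path_vec_def)
  from Fmor_eq_sum[OF _ this] show ?thesis by (simp add: path_vec_def)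
qed

lemma Fmor_lincomb:
  assumes fD: "finite D" and fh: "\<And>d. d \<in> D \<Longrightarrow> finite {w. h d w \<noteq> 0}"
  shows "Fmor n g X (\<lambda>w. \<Sum>d\<in>D. a d * h d w) = (\<lambda>i j. \<Sum>d\<in>D. a d * Fmor n g X (h d) i j)"
proof -
  define S where "S = (\<Union>d\<in>D. {w. h d w \<noteq> 0})"
  have fS: "finite S" unfolding S_def using fD fh by blast
  have "{w. (\<Sum>d\<in>D. a d * h d w) \<noteq> 0} \<subseteq> S"
  proof
    fix w assume "w \<in> {w. (\<Sum>d\<in>D. a d * h d w) \<noteq> 0}"
    then obtain d where "d \<in> D" "a d * h d w \<noteq> 0"
      using sum.not_neutral_contains_not_neutral by blast
    then show "w \<in> S" unfolding S_def by auto
  qed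
  then have "Fmor n g X (\<lambda>w. \<Sum>d\<in>D. a d * h d w) = (\<lambda>i j. \<Sum>w\<in>S. (\<Sum>d\<in>D. a d * h d w) * Fpath n g X w i j)"
    by (rule Fmor_eq_sum[OF fS])
  also have "\<dots> = (\<lambda>i j. \<Sum>d\<in>D. a d * (\<Sum>w\<in>S. h d w * Fpath n g X w i j))"
    by (simp add: sum_distrib_left sum_distrib_right mult_ac sum.swap[of _ S])
  also have "\<dots> = (\<lambda>i j. \<Sum>d\<in>D. a d * Fmor n g X (h d) i j)"
  proof -
    have "Fmor n g X (h d) = (\<lambda>i j. \<Sum>w\<in>S. h d w * Fpath n g X w i j)" if "d \<in> D" for d
      using that by (intro Fmor_eq_sum[OF fS]) (auto simp: S_def)
    then show ?thesis by (intro ext sum.cong) auto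
  qed
  finally show ?thesis .
qed

lemma Fmor_HomK:
  assumes g: "0 < g" "g \<le> n" and c: "c \<in> kQ g m X Y"
  shows "Fmor n g X c \<in> HomK n g (Fobj n g X) (Fobj n g Y)"
  unfolding Fmor_def using Fpath_HomK[OF g kQ_D(2)[OF c]] by (intro HomK_lincomb) auto

lemma ideal_gens_cases:
  assumes G: "G \<in> (ideal_gens g m X Y :: (arr list \<Rightarrow> 'k::field) set)" and g: "0 < g"
  obtains w1 w2 where "G = (\<lambda>v. path_vec w1 v - path_vec w2 v)" "w1 \<noteq> w2"
      "is_path g m X w1 Y" "is_path g m X w2 Y" "num_pi w1 = num_pi w2" "num_rho w1 = num_rho w2"
    | w where "G = path_vec w" "is_path g m X w Y" "fst X < num_pi w"
proof -
  obtain u \<rho> v A B where G: "G = sandwich u \<rho> v" "(A, \<rho>, B) \<in> Rels g m"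
      "is_path g m X u A" "is_path g m B v Y"
    using G unfolding ideal_gens_def by blast
  from G(2) consider
      (comm) r s where "A = (r + 1, splus g s)" "B = (r + 1, s)"
        "\<rho> = (\<lambda>w. path_vec [Rho (r+1) (splus g s), Pi (r+1) s] w - path_vec [Pi r s, Rho r s] w)"
        "is_arrow g m (Rho (r+1) (splus g s))" "is_arrow g m (Pi (r+1) s)"
        "is_arrow g m (Pi r s)" "is_arrow g m (Rho r s)"
    | (zero) s where "A = (0, splus g s)" "B = (0, s)" "\<rho> = path_vec [Rho 0 (splus g s), Pi 0 s]" "1 \<le> s" "s \<le> g"
    unfolding Rels_def by blast
  then show thesis
  proof cases
    case comm
    have vB: "is_vertex g m (r + 1, s)" using is_path_vertex[OF G(4)] comm by simp
    show thesis
    proof (rule that(1))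
      show "G = (\<lambda>w. path_vec (u @ [Rho (r+1) (splus g s), Pi (r+1) s] @ v) w
          - path_vec (u @ [Pi r s, Rho r s] @ v) w)"
        unfolding G(1) comm(3) sandwich_path_vec_diff ..
    qed (use G(3,4) comm vB in \<open>auto simp: is_path_append num_pi_append num_rho_append\<close>)
  next
    case zero
    have vA: "is_vertex g m (0, splus g s)" and vB: "is_vertex g m (0, s)"
      using is_path_vertex[OF G(3)] is_path_vertex[OF G(4)] zero by auto
    have "fst X \<le> num_pi u" using path_endpoint[OF g G(3)] zero by simp
    moreover have "is_vertex g m (1, splus g s)" using vA unfolding is_vertex_def by auto
    ultimately show thesis
      using G(3,4) zero vA vB
      by (intro that(2)[of "u @ [Rho 0 (splus g s), Pi 0 s] @ v"])
         (auto simp: G(1) sandwich_path_vec is_path_append num_pi_append is_arrow_def)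
  qed
qed

lemma Fmor_ideal_gen:
  assumes g: "0 < g" "g \<le> n" and G: "G \<in> (ideal_gens g m X Y :: (arr list \<Rightarrow> 'k::field) set)"
  shows "finite {w. G w \<noteq> 0} \<and> Fmor n g X G = (\<lambda>i j. 0)"
  using G g(1)
proof (cases rule: ideal_gens_cases)
  case (1 w1 w2)
  have supp: "{w. G w \<noteq> 0} \<subseteq> {w1, w2}" by (auto simp: 1(1) path_vec_def)
  have "Fmor n g X G = (\<lambda>i j. Fpath n g X w1 i j - Fpath n g X w2 i j)"
    using Fmor_eq_sum[OF _ supp] 1(1,2) by (simp add: path_vec_def)
  then show ?thesis using finite_subset[OF supp] 1(3-6) by (simp add: Fpath_eq_path_mat[OF g])
next
  case (2 w)
  have "finite {v. G v \<noteq> 0}" using 2(1) by (simp add: path_vec_def)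
  then show ?thesis using 2 by (simp add: Fmor_path_vec Fpath_eq_zero[OF g])
qed

lemma Fmor_ideal:
  assumes g: "0 < g" "g \<le> n" and c: "c \<in> (ideal g m X Y :: (arr list \<Rightarrow> 'k::field) set)"
  shows "Fmor n g X c = (\<lambda>i j. 0)"
proof -
  obtain N a G where G: "\<forall>k<(N::nat). G k \<in> (ideal_gens g m X Y :: (arr list \<Rightarrow> 'k) set)"
      and c: "c = (\<lambda>w. \<Sum>k<N. a k * G k w)"
    using c unfolding ideal_def by blast
  have G0: "finite {w. G k w \<noteq> 0} \<and> Fmor n g X (G k) = (\<lambda>i j. 0)" if "k < N" for k
    using G Fmor_ideal_gen[OF g] that by blast
  have "Fmor n g X c = (\<lambda>i j. \<Sum>k<N. a k * Fmor n g X (G k) i j)"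
    unfolding c by (rule Fmor_lincomb) (use G0 in auto)
  then show ?thesis using G0 by simp
qed

lemma kQ_cong_normal_form:
  assumes g: "0 < g" and c: "c \<in> kQ g m X Y"
  shows "ideal_cong g m X Y c (\<lambda>v. \<Sum>w | c w \<noteq> 0. c w * normal_form g X w v)"
proof -
  define S where "S = {w. c w \<noteq> 0}"
  have fS: "finite S" and pS: "\<And>w. w \<in> S \<Longrightarrow> is_path g m X w Y" using kQ_D[OF c] unfolding S_def by auto
  have "(\<lambda>v. \<Sum>w\<in>S. c w * (path_vec w v - normal_form g X w v)) \<in> ideal g m X Y"
    using fS path_reduction[OF g pS] unfolding ideal_cong_def by (intro ideal_sum) auto
  moreover have "c v - (\<Sum>w\<in>S. c w * normal_form g X w v) = (\<Sum>w\<in>S. c w * (path_vec w v - normal_form g X w v))" for v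
    using path_vec_expansion[OF fS, of c v] unfolding S_def
    by (simp add: sum_subtractf right_diff_distrib)
  ultimately show ?thesis unfolding ideal_cong_def S_def by simp
qed

lemma Fmor_entry:
  assumes g: "0 < g" "g \<le> n" and c: "c \<in> kQ g m X Y" and p0: "is_path g m X w0 Y"
  shows "Fmor n g X c (nat (Fstart g X + path_shift n g X (num_rho w0))) (nat (Fstart g X))
       = (\<Sum>w | c w \<noteq> 0. if num_pi w \<le> fst X \<and> num_rho w = num_rho w0 then c w else 0)"
  unfolding Fmor_def
proof (intro sum.cong refl)
  fix w assume "w \<in> {w. c w \<noteq> 0}"
  then have p: "is_path g m X w Y" using kQ_D(2)[OF c] by simp
  have "0 < Fstart g X" using Fstart_bounds[OF g(1), of X] by linarith
  moreover have "0 \<le> path_shift n g X (num_rho w0)" by (rule path_shift_nonneg[OF g(1)])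
  ultimately have a: "int (nat (Fstart g X + path_shift n g X (num_rho w0))) = Fstart g X + path_shift n g X (num_rho w0)"
    and b: "int (nat (Fstart g X)) = Fstart g X" by simp_all
  have "path_shift n g X (num_rho w0) = path_shift n g X (num_rho w) \<longleftrightarrow> num_rho w = num_rho w0"
    using path_shift_inj[OF g(1) p0 p, of n] by auto
  then show "c w * Fpath n g X w (nat (Fstart g X + path_shift n g X (num_rho w0))) (nat (Fstart g X))
      = (if num_pi w \<le> fst X \<and> num_rho w = num_rho w0 then c w else 0)"
    unfolding Fpath_eq_path_mat[OF g p] path_mat_def a b Fstart_le_path_top_iff[OF g] by simp
qed

text \<open>Distinct normal paths from X to Y have distinct images under F, which are read off
  from the first column of Fmor c.\<close>

lemma normal_form_sum_eq_zero:
  assumes g: "0 < g" "g \<le> n" and c: "c \<in> kQ g m X Y" and z: "Fmor n g X c = (\<lambda>i j. 0 :: 'k::field)"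
  shows "(\<Sum>w | c w \<noteq> 0. c w * normal_form g X w v) = 0"
proof (cases "\<exists>w0. c w0 \<noteq> 0 \<and> num_pi w0 \<le> fst X \<and> v = normal_path g X (num_pi w0) (num_rho w0)")
  case False
  then show ?thesis by (intro sum.neutral) (auto simp: normal_form_def path_vec_def)
next
  case True
  then obtain w0 where w0: "c w0 \<noteq> 0" "num_pi w0 \<le> fst X" "v = normal_path g X (num_pi w0) (num_rho w0)"
    by blast
  have p0: "is_path g m X w0 Y" using kQ_D(2)[OF c w0(1)] .
  have "(\<Sum>w | c w \<noteq> 0. c w * normal_form g X w v)
      = (\<Sum>w | c w \<noteq> 0. if num_pi w \<le> fst X \<and> num_rho w = num_rho w0 then c w else 0)"
  proof (intro sum.cong refl)
    fix w assume "w \<in> {w. c w \<noteq> 0}"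
    then have p: "is_path g m X w Y" using kQ_D(2)[OF c] by simp
    have "num_rho w = num_rho w0 \<Longrightarrow> num_pi w = num_pi w0"
      using path_endpoint[OF g(1) p] path_endpoint[OF g(1) p0] by simp
    then have "v = normal_path g X (num_pi w) (num_rho w) \<longleftrightarrow> num_rho w = num_rho w0"
      using w0(3) num_rho_normal_path by metis
    then show "c w * normal_form g X w v = (if num_pi w \<le> fst X \<and> num_rho w = num_rho w0 then c w else 0)"
      by (auto simp: normal_form_def path_vec_def)
  qed
  also have "\<dots> = 0" using Fmor_entry[OF g c p0] z by simp
  finally show ?thesis .
qed

lemma ideal_if_Fmor_zero:
  assumes g: "0 < g" "g \<le> n" and c: "c \<in> (kQ g m X Y :: (arr list \<Rightarrow> 'k::field) set)"
    and z: "Fmor n g X c = (\<lambda>i j. 0)"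
  shows "c \<in> ideal g m X Y"
  using kQ_cong_normal_form[OF g(1) c] normal_form_sum_eq_zero[OF g c z]
  by (simp add: ideal_cong_zero_iff)

lemma shift_mat_realised:
  assumes g: "0 < g" "g \<le> n" and X: "is_vertex g m X" and Y: "is_vertex g m Y"
    and d: "d \<in> shift_degrees n (Fobj n g X) (Fobj n g Y)"
  obtains w where "is_path g m X w Y" "(Fpath n g X w :: 'k::field mat) = shift_mat (Fobj n g X) (Fobj n g Y) d"
proof -
  obtain i j where ij: "j \<le> fst X" "int (fst Y) = int (fst X) + int i - int j"
      "int g dvd (int (snd X) - int j - int (snd Y))" "path_shift n g X i = d"
    using shift_degree_realised[OF g d] by blast
  have "is_path g m X (normal_path g X j i) Y" by (rule normal_path_is_path[OF X Y ij(1-3)])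
  then show thesis using Fpath_eq_shift_mat[OF g] ij(4) num_rho_normal_path that by metis
qed

lemma lincomb_path_vec_in_kQ:
  assumes fD: "finite D" and H: "\<And>d. d \<in> D \<Longrightarrow> is_path g m X (H d) Y"
  shows "(\<lambda>v. \<Sum>d\<in>D. a d * path_vec (H d) v) \<in> (kQ g m X Y :: (arr list \<Rightarrow> 'k::field) set)"
proof -
  have supp: "{v. (\<Sum>d\<in>D. a d * (path_vec (H d) v :: 'k)) \<noteq> 0} \<subseteq> H ` D"
  proof
    fix v assume "v \<in> {v. (\<Sum>d\<in>D. a d * (path_vec (H d) v :: 'k)) \<noteq> 0}"
    then obtain d where "d \<in> D" "a d * (path_vec (H d) v :: 'k) \<noteq> 0"
      using sum.not_neutral_contains_not_neutral by blast
    then show "v \<in> H ` D" by (auto simp: path_vec_def split: if_splits)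
  qed
  have "finite (H ` D)" using fD by simp
  with supp show ?thesis unfolding kQ_def using H by (auto intro: finite_subset)
qed

lemma Fmor_onto_HomK:
  assumes g: "0 < g" "g \<le> n" and X: "is_vertex g m X" and Y: "is_vertex g m Y"
    and M: "M \<in> (HomK n g (Fobj n g X) (Fobj n g Y) :: 'k::field mat set)"
  shows "\<exists>c \<in> (kQ g m X Y :: (arr list \<Rightarrow> 'k) set). Fmor n g X c = M"
proof -
  obtain pV qV pW qW where V: "Fobj n g X = (pV, qV)" and W: "Fobj n g Y = (pW, qW)" by fastforce
  define D where "D = shift_degrees n (pV, qV) (pW, qW)"
  define coef where "coef d = M (nat (int pV + d)) pV" for d
  have gV: "good_interval n g (pV, qV)" and gW: "good_interval n g (pW, qW)"
    using good_interval_Fobj[OF g] V W by metis+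
  have MD: "M = (\<lambda>x y. \<Sum>d\<in>D. coef d * shift_mat (pV, qV) (pW, qW) d x y)"
    unfolding D_def coef_def by (rule HomK_eq_sum_shift_mat[OF gV gW]) (use M V W in simp)
  have "\<exists>w. is_path g m X w Y \<and> (Fpath n g X w :: 'k mat) = shift_mat (pV, qV) (pW, qW) d" if "d \<in> D" for d
    using shift_mat_realised[OF g X Y, of d] that unfolding D_def V W by blast
  then obtain H where H: "\<And>d. d \<in> D \<Longrightarrow> is_path g m X (H d) Y"
      "\<And>d. d \<in> D \<Longrightarrow> (Fpath n g X (H d) :: 'k mat) = shift_mat (pV, qV) (pW, qW) d"
    using bchoice[of D] by (metis (no_types, lifting))
  have fD: "finite D" unfolding D_def by (rule finite_shift_degrees)
  have "Fmor n g X (\<lambda>v. \<Sum>d\<in>D. coef d * path_vec (H d) v)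
      = (\<lambda>x y. \<Sum>d\<in>D. coef d * Fmor n g X (path_vec (H d)) x y)"
    by (rule Fmor_lincomb[OF fD]) (simp add: path_vec_def)
  also have "\<dots> = M" unfolding MD Fmor_path_vec using H(2) by simp
  finally have "Fmor n g X (\<lambda>v. \<Sum>d\<in>D. coef d * path_vec (H d) v) = M" .
  moreover have "(\<lambda>v. \<Sum>d\<in>D. coef d * path_vec (H d) v) \<in> (kQ g m X Y :: (arr list \<Rightarrow> 'k) set)"
    using fD H(1) by (rule lincomb_path_vec_in_kQ)
  ultimately show ?thesis by blast
qed

theorem mainTheorem2:
  fixes n g m :: nat
  assumes "1 \<le> n" and "1 \<le> g" and "g \<le> n"
  shows "inj_on (Fobj n g) {X. is_vertex g m X}
       \<and> (\<forall>X Y. is_vertex g m X \<longrightarrow> is_vertex g m Y \<longrightarrow>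
            (\<forall>c \<in> (kQ g m X Y :: (arr list \<Rightarrow> 'k::alg_closed_field) set).
               Fmor n g X c \<in> HomK n g (Fobj n g X) (Fobj n g Y)
             \<and> (Fmor n g X c = (\<lambda>i j. 0) \<longleftrightarrow> c \<in> ideal g m X Y))
          \<and> Fmor n g X ` (kQ g m X Y :: (arr list \<Rightarrow> 'k) set) = HomK n g (Fobj n g X) (Fobj n g Y))"
proof -
  have g: "0 < g" "g \<le> n" using assms by auto
  have "inj_on (Fobj n g) {X. is_vertex g m X}"
    by (rule inj_onI) (use Fobj_inj[OF g] in auto)
  moreover have "Fmor n g X c \<in> HomK n g (Fobj n g X) (Fobj n g Y)
      \<and> (Fmor n g X c = (\<lambda>i j. 0) \<longleftrightarrow> c \<in> ideal g m X Y)"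
    if "c \<in> (kQ g m X Y :: (arr list \<Rightarrow> 'k) set)" for X Y c
    using Fmor_HomK[OF g that] ideal_if_Fmor_zero[OF g that] Fmor_ideal[OF g] by blast
  moreover have "Fmor n g X ` (kQ g m X Y :: (arr list \<Rightarrow> 'k) set) = HomK n g (Fobj n g X) (Fobj n g Y)"
    if "is_vertex g m X" "is_vertex g m Y" for X Y
    using Fmor_HomK[OF g] Fmor_onto_HomK[OF g that] by blast
  ultimately show ?thesis by blast
qed

end
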